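(* Assume $|\chi|=\infty$ and that $q=\chi^{-1}(a)$ has finite order $s$. For every $m\ge0$ there is an $H$-module $E_m\in P_m$ with $V_{s+1}(\varepsilon)^{\otimes m}\cong V_{ms+1}(\varepsilon)\oplus E_m$, where $P_0=\{0\}$ and, for $m\ge1$, $P_m$ is the class of modules of the form $\bigoplus_{i=1}^{ms}n_iV_i(\lambda_i)$ with $\lambda_i\in\hat G$ and integers $n_i\ge0$.
   Context: Let $k$ be an algebraically closed field of characteristic zero, $G$ a group, $a$ a central element of $G$, $\hat G$ the group of characters $G\to k^\times$ with identity $\varepsilon$, and $\chi\in\hat G$ with $\chi(a)\ne1$. $H=kG(\chi^{-1},a,0)$ is the Hopf algebra generated by the group $G$ and $x$ with $xg=\chi^{-1}(g)gx$, $\Delta(g)=g\otimes g$, $\Delta(x)=x\otimes a+1\otimes x$; tensor products of $H$-modules: $g(m\otimes n)=gm\otimes gn$, $x(m\otimes n)=xm\otimes an+m\otimes xn$. $V_t(\lambda)$ ($\lambda\in\hat G$, $t\ge1$) has basis $m_0,\dots,m_{t-1}$, $gm_i=\chi^i(g)\lambda(g)m_i$, $xm_i=m_{i+1}$ ($i\le t-2$), $xm_{t-1}=0$. $V^{\otimes0}=V_1(\varepsilon)$; $nM$ is the direct sum of $n$ copies of $M$. *)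

theory Defs
  imports "Jordan_Normal_Form.Matrix" "HOL-Algebra.Group" "HOL-Computational_Algebra.Polynomial"
begin

text \<open>Algebraically closed field (the characteristic-zero hypothesis is the type class field_char_0).\<close>
definition alg_closed :: "'k::field itself \<Rightarrow> bool" where
  "alg_closed _ \<longleftrightarrow> (\<forall>p::'k poly. degree p \<ge> 1 \<longrightarrow> (\<exists>x. poly p x = 0))"

definition character :: "('g, 'b) monoid_scheme \<Rightarrow> ('g \<Rightarrow> 'k::field) \<Rightarrow> bool" where
  "character G \<mu> \<longleftrightarrow> (\<forall>g\<in>carrier G. \<mu> g \<noteq> 0) \<and>
     (\<forall>g\<in>carrier G. \<forall>h\<in>carrier G. \<mu> (g \<otimes>\<^bsub>G\<^esub> h) = \<mu> g * \<mu> h)"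

definition eps_char :: "'g \<Rightarrow> 'k::field" where
  "eps_char = (\<lambda>_. 1)"

text \<open>A finite-dimensional H-module, H = kG(chi^{-1},a,0), given in matrix form with respect
  to a chosen basis: the matrices of the action of every g in G, and the matrix of the action of x.\<close>
type_synonym ('g, 'k) hmod = "('g \<Rightarrow> 'k mat) \<times> 'k mat"

definition hdim :: "('g, 'k) hmod \<Rightarrow> nat" where
  "hdim M = dim_row (snd M)"

definition hmod_iso :: "('g, 'b) monoid_scheme \<Rightarrow> ('g, 'k::field) hmod \<Rightarrow> ('g, 'k) hmod \<Rightarrow> bool" where
  "hmod_iso G M N \<longleftrightarrow> (\<exists>P Q. P \<in> carrier_mat (hdim N) (hdim M) \<and> Q \<in> carrier_mat (hdim M) (hdim N) \<and>
      P * Q = 1\<^sub>m (hdim N) \<and> Q * P = 1\<^sub>m (hdim M) \<and>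
      (\<forall>g\<in>carrier G. P * fst M g = fst N g * P) \<and> P * snd M = snd N * P)"

text \<open>The module V_t(lambda): basis m_0..m_{t-1}, g m_i = chi^i(g) lambda(g) m_i, x m_i = m_{i+1},
  x m_{t-1} = 0 (columns are the images of basis vectors).\<close>
definition Vmod :: "('g \<Rightarrow> 'k::field) \<Rightarrow> nat \<Rightarrow> ('g \<Rightarrow> 'k) \<Rightarrow> ('g, 'k) hmod" where
  "Vmod \<chi> t \<mu> = ((\<lambda>g. mat t t (\<lambda>(i,j). if i = j then \<chi> g ^ i * \<mu> g else 0)),
                  mat t t (\<lambda>(i,j). if i = j + 1 then 1 else 0))"

definition kron :: "'k::field mat \<Rightarrow> 'k mat \<Rightarrow> 'k mat" where
  "kron A B = mat (dim_row A * dim_row B) (dim_col A * dim_col B)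
     (\<lambda>(i,j). A $$ (i div dim_row B, j div dim_col B) * B $$ (i mod dim_row B, j mod dim_col B))"

text \<open>Tensor product of H-modules: g(m\<otimes>n) = gm\<otimes>gn, x(m\<otimes>n) = xm\<otimes>an + m\<otimes>xn.\<close>
definition htensor :: "'g \<Rightarrow> ('g, 'k::field) hmod \<Rightarrow> ('g, 'k) hmod \<Rightarrow> ('g, 'k) hmod" where
  "htensor a M N = ((\<lambda>g. kron (fst M g) (fst N g)),
                    kron (snd M) (fst N a) + kron (1\<^sub>m (hdim M)) (snd N))"

definition hdsum :: "('g, 'k::field) hmod \<Rightarrow> ('g, 'k) hmod \<Rightarrow> ('g, 'k) hmod" where
  "hdsum M N = ((\<lambda>g. four_block_mat (fst M g) (0\<^sub>m (hdim M) (hdim N)) (0\<^sub>m (hdim N) (hdim M)) (fst N g)),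
                four_block_mat (snd M) (0\<^sub>m (hdim M) (hdim N)) (0\<^sub>m (hdim N) (hdim M)) (snd N))"

definition hzero :: "('g, 'k::field) hmod" where
  "hzero = ((\<lambda>g. 0\<^sub>m 0 0), 0\<^sub>m 0 0)"

fun hdsum_list :: "('g, 'k::field) hmod list \<Rightarrow> ('g, 'k) hmod" where
  "hdsum_list [] = hzero"
| "hdsum_list (M # Ms) = hdsum M (hdsum_list Ms)"

fun htpow :: "('g \<Rightarrow> 'k::field) \<Rightarrow> 'g \<Rightarrow> ('g, 'k) hmod \<Rightarrow> nat \<Rightarrow> ('g, 'k) hmod" where
  "htpow \<chi> a V 0 = Vmod \<chi> 1 eps_char"
| "htpow \<chi> a V (Suc m) = htensor a (htpow \<chi> a V m) V"

definition in_P :: "('g, 'b) monoid_scheme \<Rightarrow> ('g \<Rightarrow> 'k::field) \<Rightarrow> nat \<Rightarrow> nat \<Rightarrow> ('g, 'k) hmod \<Rightarrow> bool" where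
  "in_P G \<chi> s m E \<longleftrightarrow> (\<exists>L. (\<forall>(i, \<mu>)\<in>set L. 1 \<le> i \<and> i \<le> m * s \<and> character G \<mu>) \<and>
       E = hdsum_list (map (\<lambda>(i, \<mu>). Vmod \<chi> i \<mu>) L))"

end

theory Submission
  imports Defs "Jordan_Normal_Form.Determinant"
begin

text \<open>Grade \<open>V\<^sub>s\<^sub>+\<^sub>1(\<epsilon>)\<^bsup>\<otimes>m\<^esup>\<close> by the digit sum of the Kronecker index of the basis vectors: \<open>G\<close> acts on
  degree \<open>e\<close> by \<open>\<chi>\<^sup>e\<close>, and \<open>x\<close> raises degrees by one, so it is nilpotent. A graded nilpotent matrix has
  a Jordan basis of homogeneous vectors, and such a basis splits the module into modules \<open>V\<^sub>l(\<chi>\<^sup>e)\<close>.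
  Degrees are at most \<open>m s\<close>, and degree 0 is spanned by the single vector \<open>m\<^sub>0 \<otimes> \<dots> \<otimes> m\<^sub>0\<close>. By the
  \<open>q\<close>-binomial theorem and \<open>qbinom (\<chi> a) (k s) s = k\<close>, \<open>x\<^sup>m\<^sup>s\<close> sends it to \<open>m!\<close> times the top basis vector,
  which is nonzero in characteristic zero, so it generates a block of length \<open>m s + 1\<close>. Any other block
  of that length would have to start in degree 0 as well, and so would need a second vector of degree 0.\<close>

lemma index_mult_mat_sum:
  assumes "i < dim_row A" "j < dim_col B" "dim_col A = n" "dim_row B = n"
  shows "(A * B) $$ (i, j) = (\<Sum>k<n. A $$ (i, k) * B $$ (k, j))"
  using assms by (simp add: scalar_prod_def lessThan_atLeast0)

lemma sum_lessThan_eq_single: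
  assumes "k0 < (n::nat)" "\<And>k. k < n \<Longrightarrow> k \<noteq> k0 \<Longrightarrow> f k = (0::'a::comm_monoid_add)"
  shows "(\<Sum>k<n. f k) = f k0"
  using assms by (simp add: sum.remove[of "{..<n}" k0] sum.neutral)

lemma sum_lessThan_mult: "(\<Sum>q<a * (b::nat). f q) = (\<Sum>k<a. \<Sum>j<b. f (k * b + j))"
proof -
  have "(\<Sum>q<a * b. f q) = (\<Sum>k<a. sum f {k * b..<k * b + b})"
    by (rule sum.nat_group[symmetric])
  also have "\<dots> = (\<Sum>k<a. \<Sum>j<b. f (k * b + j))"
  proof (rule sum.cong[OF refl])
    fix k
    show "sum f {k * b..<k * b + b} = (\<Sum>j<b. f (k * b + j))"
      using sum.atLeastLessThan_shift_bounds[of f 0 "k * b" b]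
      by (simp add: add.commute lessThan_atLeast0 comp_def)
  qed
  finally show ?thesis .
qed

lemma mult_add_less_mult: "i < N \<Longrightarrow> j < b \<Longrightarrow> i * b + j < N * (b::nat)"
proof -
  assume "i < N" "j < b"
  then have "i * b + j < Suc i * b" by simp
  also have "\<dots> \<le> N * b" using \<open>i < N\<close> by (intro mult_le_mono1) simp
  finally show ?thesis .
qed

lemma pow_mat_add: "A \<in> carrier_mat n n \<Longrightarrow> A ^\<^sub>m (k + l) = A ^\<^sub>m k * A ^\<^sub>m l"
  by (induction l) (simp_all flip: assoc_mult_mat[of _ n n _ n _ n])

lemma pow_mat_Suc_left: "A \<in> carrier_mat n n \<Longrightarrow> A ^\<^sub>m Suc k = A * A ^\<^sub>m k"
  using pow_mat_add[of A n 1 k] by simp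

lemma index_pow_mat_add:
  assumes "A \<in> carrier_mat n n" "i < n" "j < n"
  shows "(A ^\<^sub>m (k + l)) $$ (i, j) = (\<Sum>q<n. (A ^\<^sub>m k) $$ (i, q) * (A ^\<^sub>m l) $$ (q, j))"
  unfolding pow_mat_add[OF assms(1)] by (rule index_mult_mat_sum) (use assms in auto)

lemma index_pow_mat_Suc:
  assumes "A \<in> carrier_mat n n" "i < n" "j < n"
  shows "(A ^\<^sub>m Suc k) $$ (i, j) = (\<Sum>q<n. (A ^\<^sub>m k) $$ (i, q) * A $$ (q, j))"
  unfolding pow_mat.simps(2) by (rule index_mult_mat_sum) (use assms in auto)

lemma index_pow_mat_Suc_left:
  assumes "A \<in> carrier_mat n n" "i < n" "j < n"
  shows "(A ^\<^sub>m Suc k) $$ (i, j) = (\<Sum>q<n. A $$ (i, q) * (A ^\<^sub>m k) $$ (q, j))"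
  unfolding pow_mat_Suc_left[OF assms(1)] by (rule index_mult_mat_sum) (use assms in auto)

lemma minus_zero_mat [simp]: "A \<in> carrier_mat nr nc \<Longrightarrow> A - 0\<^sub>m nr nc = (A :: 'a::group_add mat)"
  by (rule eq_matI) auto

lemma four_block_mat_empty:
  "A \<in> carrier_mat nr nc \<Longrightarrow> B \<in> carrier_mat nr 0 \<Longrightarrow> C \<in> carrier_mat 0 nc \<Longrightarrow> D \<in> carrier_mat 0 0 \<Longrightarrow>
    four_block_mat A B C D = A"
  by (rule eq_matI) auto

lemma four_block_mat_diag:
  "four_block_mat (mat_diag n f) (0\<^sub>m n m) (0\<^sub>m m n) (mat_diag m g) =
    mat_diag (n + m) (\<lambda>i. if i < n then f i else g (i - n))"
  by (rule eq_matI) (auto simp: mat_diag_def)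

lemma kron_dims [simp]:
  "dim_row (kron A B) = dim_row A * dim_row B" "dim_col (kron A B) = dim_col A * dim_col B"
  by (auto simp: kron_def)

lemma index_kron:
  "i < dim_row A * dim_row B \<Longrightarrow> j < dim_col A * dim_col B \<Longrightarrow>
    kron A B $$ (i, j) = A $$ (i div dim_row B, j div dim_col B) * B $$ (i mod dim_row B, j mod dim_col B)"
  by (simp add: kron_def)

lemma kron_carrier_mat:
  "A \<in> carrier_mat nA mA \<Longrightarrow> B \<in> carrier_mat nB mB \<Longrightarrow> kron A B \<in> carrier_mat (nA * nB) (mA * mB)"
  unfolding carrier_mat_def by simp

lemma kron_mat_diag:
  "kron (mat_diag n1 f1) (mat_diag n2 f2) = mat_diag (n1 * n2) (\<lambda>i. f1 (i div n2) * f2 (i mod n2))"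
proof (rule eq_matI)
  fix i j assume "i < dim_row (mat_diag (n1 * n2) (\<lambda>i. f1 (i div n2) * f2 (i mod n2)))"
    "j < dim_col (mat_diag (n1 * n2) (\<lambda>i. f1 (i div n2) * f2 (i mod n2)))"
  then have ij: "i < n1 * n2" "j < n1 * n2" by (auto simp: mat_diag_def)
  then have "0 < n2" by (cases n2) auto
  with ij have bounds: "i div n2 < n1" "j div n2 < n1" "i mod n2 < n2" "j mod n2 < n2"
    by (auto simp: less_mult_imp_div_less)
  have "i = j \<longleftrightarrow> i div n2 = j div n2 \<and> i mod n2 = j mod n2"
    by (metis div_mult_mod_eq)
  with ij bounds show "kron (mat_diag n1 f1) (mat_diag n2 f2) $$ (i, j) =
      mat_diag (n1 * n2) (\<lambda>i. f1 (i div n2) * f2 (i mod n2)) $$ (i, j)"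
    by (auto simp: index_kron mat_diag_def)
qed (auto simp: mat_diag_def)

section \<open>Homogeneous matrices\<close>

definition homogeneous_mat :: "(nat \<Rightarrow> nat) \<Rightarrow> (nat \<Rightarrow> nat) \<Rightarrow> nat \<Rightarrow> 'a::zero mat \<Rightarrow> bool" where
  "homogeneous_mat dr dc k A \<longleftrightarrow> (\<forall>i<dim_row A. \<forall>j<dim_col A. A $$ (i, j) \<noteq> 0 \<longrightarrow> dr i = dc j + k)"

lemma homogeneous_matI:
  "(\<And>i j. i < dim_row A \<Longrightarrow> j < dim_col A \<Longrightarrow> A $$ (i, j) \<noteq> 0 \<Longrightarrow> dr i = dc j + k) \<Longrightarrow>
    homogeneous_mat dr dc k A"
  by (auto simp: homogeneous_mat_def)

lemma homogeneous_matD: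
  "homogeneous_mat dr dc k A \<Longrightarrow> i < dim_row A \<Longrightarrow> j < dim_col A \<Longrightarrow> A $$ (i, j) \<noteq> 0 \<Longrightarrow> dr i = dc j + k"
  by (auto simp: homogeneous_mat_def)

lemma homogeneous_mat_cong:
  "(\<And>i. i < dim_row A \<Longrightarrow> dr i = dr' i) \<Longrightarrow> (\<And>j. j < dim_col A \<Longrightarrow> dc j = dc' j) \<Longrightarrow>
    homogeneous_mat dr dc k A \<Longrightarrow> homogeneous_mat dr' dc' k A"
  by (auto simp: homogeneous_mat_def)

lemma homogeneous_mat_zero: "homogeneous_mat dr dc k (0\<^sub>m nr nc)"
  by (auto simp: homogeneous_mat_def)

lemma homogeneous_mat_one: "homogeneous_mat d d 0 (1\<^sub>m n)"
  by (auto simp: homogeneous_mat_def)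

lemma homogeneous_mat_add:
  assumes A: "homogeneous_mat dr dc k A" and B: "homogeneous_mat dr dc k B"
    and dim: "B \<in> carrier_mat (dim_row A) (dim_col A)"
  shows "homogeneous_mat dr dc k (A + B :: 'a::monoid_add mat)"
proof (rule homogeneous_matI)
  fix i j assume ij: "i < dim_row (A + B)" "j < dim_col (A + B)" and "(A + B) $$ (i, j) \<noteq> 0"
  then have "A $$ (i, j) \<noteq> 0 \<or> B $$ (i, j) \<noteq> 0" using dim by auto
  moreover have "i < dim_row A" "j < dim_col A" using ij dim by auto
  moreover have "i < dim_row B" "j < dim_col B" using ij dim by auto
  ultimately show "dr i = dc j + k" using homogeneous_matD[OF A] homogeneous_matD[OF B] by blast
qed

lemma homogeneous_mat_diff:
  assumes A: "homogeneous_mat dr dc k A" and B: "homogeneous_mat dr dc k B"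
    and dim: "B \<in> carrier_mat (dim_row A) (dim_col A)"
  shows "homogeneous_mat dr dc k (A - B :: 'a::group_add mat)"
proof (rule homogeneous_matI)
  fix i j assume ij: "i < dim_row (A - B)" "j < dim_col (A - B)" and "(A - B) $$ (i, j) \<noteq> 0"
  then have "A $$ (i, j) \<noteq> 0 \<or> B $$ (i, j) \<noteq> 0" using dim by auto
  moreover have "i < dim_row A" "j < dim_col A" using ij dim by auto
  moreover have "i < dim_row B" "j < dim_col B" using ij dim by auto
  ultimately show "dr i = dc j + k" using homogeneous_matD[OF A] homogeneous_matD[OF B] by blast
qed

lemma homogeneous_mat_mult:
  assumes A: "homogeneous_mat d1 d2 k A" and B: "homogeneous_mat d2 d3 l B" and dim: "dim_col A = dim_row B"
  shows "homogeneous_mat d1 d3 (k + l) (A * B :: 'a::semiring_0 mat)"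
proof (rule homogeneous_matI)
  fix i j assume i: "i < dim_row (A * B)" and j: "j < dim_col (A * B)" and nz: "(A * B) $$ (i, j) \<noteq> 0"
  have "(A * B) $$ (i, j) = (\<Sum>q<dim_row B. A $$ (i, q) * B $$ (q, j))"
    by (rule index_mult_mat_sum) (use i j dim in auto)
  with nz have sum_nz: "(\<Sum>q<dim_row B. A $$ (i, q) * B $$ (q, j)) \<noteq> 0" by simp
  have "\<exists>q<dim_row B. A $$ (i, q) * B $$ (q, j) \<noteq> 0"
  proof (rule ccontr)
    assume "\<not> ?thesis"
    then have "(\<Sum>q<dim_row B. A $$ (i, q) * B $$ (q, j)) = 0" by (intro sum.neutral) auto
    with sum_nz show False by simp
  qed
  then obtain q where "q < dim_row B" "A $$ (i, q) * B $$ (q, j) \<noteq> 0" by blast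
  then have q: "q < dim_row B" "A $$ (i, q) \<noteq> 0" "B $$ (q, j) \<noteq> 0" by auto
  have "d1 i = d2 q + k" using homogeneous_matD[OF A _ _ q(2)] i q(1) dim by simp
  moreover have "d2 q = d3 j + l" using homogeneous_matD[OF B q(1) _ q(3)] j by simp
  ultimately show "d1 i = d3 j + (k + l)" by simp
qed

lemma homogeneous_mat_pow:
  assumes "homogeneous_mat d d 1 X" "X \<in> carrier_mat n n"
  shows "homogeneous_mat d d k (X ^\<^sub>m k :: 'a::semiring_1 mat)"
proof (induction k)
  case 0
  show ?case using assms(2) by (simp add: homogeneous_mat_one)
next
  case (Suc k)
  show ?case using homogeneous_mat_mult[OF Suc assms(1)] assms(2) by simp
qed

lemma homogeneous_mat_pow_eq_0:
  assumes "homogeneous_mat d d 1 X" "X \<in> carrier_mat n n" "\<And>i. i < n \<Longrightarrow> d i \<le> D" "D < k"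
  shows "X ^\<^sub>m k = (0\<^sub>m n n :: 'a::semiring_1 mat)"
proof (rule eq_matI)
  fix i j assume "i < dim_row (0\<^sub>m n n :: 'a mat)" "j < dim_col (0\<^sub>m n n :: 'a mat)"
  then have ij: "i < n" "j < n" by auto
  show "(X ^\<^sub>m k) $$ (i, j) = 0\<^sub>m n n $$ (i, j)"
  proof (rule ccontr)
    assume "(X ^\<^sub>m k) $$ (i, j) \<noteq> 0\<^sub>m n n $$ (i, j)"
    then have "(X ^\<^sub>m k) $$ (i, j) \<noteq> 0" using ij by simp
    then have "d i = d j + k"
      using homogeneous_matD[OF homogeneous_mat_pow[OF assms(1,2)]] ij assms(2) by simp
    then show False using assms(3)[OF ij(1)] assms(4) by simp
  qed
qed (use assms in auto)

lemma homogeneous_mat_four_block: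
  assumes "homogeneous_mat dra dca k A" "homogeneous_mat dra dcb k B"
    "homogeneous_mat drb dca k C" "homogeneous_mat drb dcb k D"
    "A \<in> carrier_mat na ma" "B \<in> carrier_mat na mb" "C \<in> carrier_mat nb ma" "D \<in> carrier_mat nb mb"
  shows "homogeneous_mat (\<lambda>i. if i < na then dra i else drb (i - na))
    (\<lambda>j. if j < ma then dca j else dcb (j - ma)) k (four_block_mat A B C D)"
proof (rule homogeneous_matI)
  fix i j assume "i < dim_row (four_block_mat A B C D)" "j < dim_col (four_block_mat A B C D)"
    and nz: "four_block_mat A B C D $$ (i, j) \<noteq> 0"
  then have ij: "i < na + nb" "j < ma + mb" using assms(5-8) by auto
  consider "i < na" "j < ma" | "i < na" "\<not> j < ma" | "\<not> i < na" "j < ma" | "\<not> i < na" "\<not> j < ma"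
    by blast
  then show "(if i < na then dra i else drb (i - na)) = (if j < ma then dca j else dcb (j - ma)) + k"
  proof cases
    case 1 with nz ij assms(5-8) show ?thesis using homogeneous_matD[OF assms(1)] by auto
  next
    case 2 with nz ij assms(5-8) show ?thesis using homogeneous_matD[OF assms(2)] by auto
  next
    case 3 with nz ij assms(5-8) show ?thesis using homogeneous_matD[OF assms(3)] by auto
  next
    case 4 with nz ij assms(5-8) show ?thesis using homogeneous_matD[OF assms(4)] by auto
  qed
qed

lemma homogeneous_mat_mat_diag: "homogeneous_mat d d 0 (mat_diag n f)"
  by (simp add: homogeneous_mat_def mat_diag_def)

lemma homogeneous_mat_kron:
  assumes A: "homogeneous_mat dA dA k A" and B: "homogeneous_mat dB dB l B" and "B \<in> carrier_mat b b"
  shows "homogeneous_mat (\<lambda>i. dA (i div b) + dB (i mod b)) (\<lambda>i. dA (i div b) + dB (i mod b)) (k + l) (kron A B)"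
proof (rule homogeneous_matI)
  fix i j assume ij: "i < dim_row (kron A B)" "j < dim_col (kron A B)" and nz: "kron A B $$ (i, j) \<noteq> 0"
  have dims: "dim_row B = b" "dim_col B = b" using assms(3) by auto
  then have "0 < b" using ij by (cases b) auto
  with ij dims have bounds: "i div b < dim_row A" "j div b < dim_col A" "i mod b < b" "j mod b < b"
    by (auto simp: less_mult_imp_div_less)
  have "A $$ (i div b, j div b) \<noteq> 0" "B $$ (i mod b, j mod b) \<noteq> 0"
    using nz ij dims by (auto simp: index_kron)
  then have "dA (i div b) = dA (j div b) + k" "dB (i mod b) = dB (j mod b) + l"
    using homogeneous_matD[OF A bounds(1,2)] homogeneous_matD[OF B] bounds(3,4) dims by auto
  then show "dA (i div b) + dB (i mod b) = dA (j div b) + dB (j mod b) + (k + l)" by simp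
qed

lemma homogeneous_mat_mat_diag_commute:
  assumes hom: "homogeneous_mat dr dc 0 A" and A: "A \<in> carrier_mat n m"
  shows "mat_diag n (\<lambda>i. f (dr i)) * A = A * mat_diag m (\<lambda>j. f (dc j) :: 'a::comm_semiring_1)"
  unfolding mat_diag_mult_left[OF A] mat_diag_mult_right[OF A]
proof (rule eq_matI)
  fix i j assume "i < dim_row (mat n m (\<lambda>(i, j). A $$ (i, j) * f (dc j)))"
    "j < dim_col (mat n m (\<lambda>(i, j). A $$ (i, j) * f (dc j)))"
  then have ij: "i < n" "j < m" by auto
  show "mat n m (\<lambda>(i, j). f (dr i) * A $$ (i, j)) $$ (i, j) = mat n m (\<lambda>(i, j). A $$ (i, j) * f (dc j)) $$ (i, j)"
  proof (cases "A $$ (i, j) = 0")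
    case False
    then have "dr i = dc j" using homogeneous_matD[OF hom] ij A by auto
    then show ?thesis using ij by (simp add: mult.commute)
  qed (use ij in simp)
qed auto

text \<open>In characteristic zero the grading operators \<open>diag (d i)\<close> separate the degrees.\<close>
lemma homogeneous_mat_inverse:
  fixes P Q :: "'a::field_char_0 mat"
  assumes hom: "homogeneous_mat dr dc 0 P" and P: "P \<in> carrier_mat n n" and Q: "Q \<in> carrier_mat n n"
    and PQ: "P * Q = 1\<^sub>m n" and QP: "Q * P = 1\<^sub>m n"
  shows "homogeneous_mat dc dr 0 Q"
proof (rule homogeneous_matI)
  define Dr where "Dr = mat_diag n (\<lambda>i. of_nat (dr i) :: 'a)"
  define Dc where "Dc = mat_diag n (\<lambda>j. of_nat (dc j) :: 'a)"
  have carr: "Dr \<in> carrier_mat n n" "Dc \<in> carrier_mat n n" by (simp_all add: Dr_def Dc_def)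
  have "Dr * P = P * Dc"
    unfolding Dr_def Dc_def by (rule homogeneous_mat_mat_diag_commute[OF hom P])
  have "Q * Dr = Q * Dr * (P * Q)" using Q carr PQ by simp
  also have "\<dots> = Q * (Dr * P) * Q" using P Q carr by (simp add: assoc_mult_mat[of _ n n _ n _ n])
  also have "\<dots> = (Q * P) * Dc * Q" using P Q carr \<open>Dr * P = P * Dc\<close> by (simp add: assoc_mult_mat[of _ n n _ n _ n])
  also have "\<dots> = Dc * Q" using QP carr by simp
  finally have QD: "Q * Dr = Dc * Q" .
  fix i j assume ij: "i < dim_row Q" "j < dim_col Q" and nz: "Q $$ (i, j) \<noteq> 0"
  have "(Q * Dr) $$ (i, j) = (Dc * Q) $$ (i, j)" using QD by simp
  then have "Q $$ (i, j) * of_nat (dr j) = of_nat (dc i) * Q $$ (i, j)"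
    using ij Q by (simp add: Dr_def Dc_def mat_diag_mult_left mat_diag_mult_right)
  then show "dc i = dr j + 0" using nz by simp
qed

lemma homogeneous_mat_row_degree:
  fixes P Q :: "'a::field mat"
  assumes "homogeneous_mat dr dc 0 P" "P \<in> carrier_mat n n" "Q \<in> carrier_mat n n" "P * Q = 1\<^sub>m n" "p < n"
  shows "\<exists>k<n. dr p = dc k"
proof -
  have "(\<Sum>k<n. P $$ (p, k) * Q $$ (k, p)) = (P * Q) $$ (p, p)"
    by (rule index_mult_mat_sum[symmetric]) (use assms(2,3,5) in auto)
  also have "\<dots> = 1" using assms(4,5) by simp
  finally have sum_one: "(\<Sum>k<n. P $$ (p, k) * Q $$ (k, p)) = 1" .
  have "\<exists>k<n. P $$ (p, k) * Q $$ (k, p) \<noteq> 0"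
  proof (rule ccontr)
    assume "\<not> ?thesis"
    then have "(\<Sum>k<n. P $$ (p, k) * Q $$ (k, p)) = 0" by (intro sum.neutral) auto
    with sum_one show False by simp
  qed
  then obtain k where "k < n" "P $$ (p, k) \<noteq> 0" by auto
  then show ?thesis using homogeneous_matD[OF assms(1)] assms(2,5) by auto
qed

lemma homogeneous_mat_degree_unique:
  fixes P Q :: "'a::field mat"
  assumes homP: "homogeneous_mat dr dc 0 P" and homQ: "homogeneous_mat dc dr 0 Q"
    and P: "P \<in> carrier_mat n n" and Q: "Q \<in> carrier_mat n n" and PQ: "P * Q = 1\<^sub>m n"
    and unique: "\<And>k. k < n \<Longrightarrow> dc k = e \<Longrightarrow> k = k0" and k0: "k0 < n"
    and p: "p < n" "dr p = e" and q: "q < n" "dr q = e"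
  shows "p = q"
proof -
  have entry: "(P * Q) $$ (i, j) = P $$ (i, k0) * Q $$ (k0, j)" if "i < n" "j < n" "dr j = e" for i j
  proof -
    have "Q $$ (k, j) = 0" if "k < n" "k \<noteq> k0" for k
      using homogeneous_matD[OF homQ, of k j] unique[of k] that \<open>j < n\<close> \<open>dr j = e\<close> Q by auto
    then show ?thesis
      using index_mult_mat_sum[of i P j Q n] P Q that k0 by (simp add: sum_lessThan_eq_single[of k0])
  qed
  have "P $$ (p, k0) \<noteq> 0" using entry[OF p(1) p(1) p(2)] PQ p by auto
  moreover have "Q $$ (k0, q) \<noteq> 0" using entry[OF q(1) q(1) q(2)] PQ q by auto
  ultimately have "(P * Q) $$ (p, q) \<noteq> 0" using entry[OF p(1) q(1) q(2)] by simp
  then show "p = q" using PQ p q by (auto split: if_splits)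
qed

section \<open>Splitting off a Jordan chain\<close>

definition shift_mat :: "nat \<Rightarrow> 'a::{zero,one} mat" where
  "shift_mat t = mat t t (\<lambda>(i, j). if i = j + 1 then 1 else 0)"

lemma shift_mat_carrier [simp]:
  "shift_mat t \<in> carrier_mat t t" "dim_row (shift_mat t) = t" "dim_col (shift_mat t) = t"
  by (auto simp: shift_mat_def)

lemma index_shift_mat [simp]:
  "i < t \<Longrightarrow> j < t \<Longrightarrow> shift_mat t $$ (i, j) = (if i = j + 1 then 1 else 0)"
  by (simp add: shift_mat_def)

lemma homogeneous_shift_mat: "homogeneous_mat (\<lambda>i. i) (\<lambda>i. i) 1 (shift_mat t)"
  by (simp add: homogeneous_mat_def shift_mat_def)

text \<open>The chain \<open>X\<^sup>c e\<^sub>j\<^sub>0\<close>, \<open>c < t\<close>, has exact length \<open>t\<close>, witnessed by the functional \<open>e\<^sub>r\<^sup>T X\<^sup>t\<^sup>-\<^sup>1\<close>.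
  The functionals \<open>e\<^sub>r\<^sup>T X\<^sup>t\<^sup>-\<^sup>1\<^sup>-\<^sup>c\<close> form an \<open>X\<close>-equivariant left inverse \<open>chain_dual\<close> of the chain, whose
  kernel is an \<open>X\<close>-invariant complement. A basis of this complement is obtained by projecting the
  coordinate vectors outside the pivot rows of the chain; as the chain is diagonal on its pivot rows
  (by degrees), \<open>compl_dual\<close> recovers the coordinates in this basis. Row and column blocks are stacked
  as four-block matrices with empty blocks.\<close>
locale jordan_chain =
  fixes X :: "'a::field_char_0 mat" and n t :: nat and d :: "nat \<Rightarrow> nat" and r j0 :: nat
  assumes X_carrier: "X \<in> carrier_mat n n"
    and X_homogeneous: "homogeneous_mat d d 1 X"
    and X_pow_length: "X ^\<^sub>m t = 0\<^sub>m n n"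
    and r: "r < n" and j0: "j0 < n"
    and X_pow_top: "(X ^\<^sub>m (t - 1)) $$ (r, j0) \<noteq> 0"
begin

lemma pow_degree: "(X ^\<^sub>m k) $$ (i, j) \<noteq> 0 \<Longrightarrow> i < n \<Longrightarrow> j < n \<Longrightarrow> d i = d j + k"
  using homogeneous_matD[OF homogeneous_mat_pow[OF X_homogeneous X_carrier]] X_carrier by simp

lemma pow_eq_0: "t \<le> k \<Longrightarrow> X ^\<^sub>m k = 0\<^sub>m n n"
  using pow_mat_add[OF X_carrier, of t "k - t"] X_pow_length X_carrier by simp

lemma length_pos: "0 < t"
proof (rule ccontr)
  assume "\<not> 0 < t"
  then have "(1\<^sub>m n :: 'a mat) $$ (j0, j0) = 0\<^sub>m n n $$ (j0, j0)"
    using X_pow_length X_carrier by simp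
  then show False using j0 by simp
qed

lemma top_degree: "d r = d j0 + (t - 1)"
  using pow_degree[OF X_pow_top r j0] .

lemma chain_nonzero: "c < t \<Longrightarrow> \<exists>i<n. (X ^\<^sub>m c) $$ (i, j0) \<noteq> 0"
proof (rule ccontr)
  assume c: "c < t" and zero: "\<not> (\<exists>i<n. (X ^\<^sub>m c) $$ (i, j0) \<noteq> 0)"
  have "(X ^\<^sub>m (t - 1)) $$ (r, j0) = (X ^\<^sub>m ((t - 1 - c) + c)) $$ (r, j0)" using c by simp
  also have "\<dots> = (\<Sum>q<n. (X ^\<^sub>m (t - 1 - c)) $$ (r, q) * (X ^\<^sub>m c) $$ (q, j0))"
    by (rule index_pow_mat_add[OF X_carrier r j0])
  also have "\<dots> = 0" using zero by (intro sum.neutral) auto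
  finally show False using X_pow_top by simp
qed

definition chain :: "'a mat" where
  "chain = mat n t (\<lambda>(i, c). (X ^\<^sub>m c) $$ (i, j0))"

definition chain_dual :: "'a mat" where
  "chain_dual = mat t n (\<lambda>(c, k). (X ^\<^sub>m (t - 1 - c)) $$ (r, k) / (X ^\<^sub>m (t - 1)) $$ (r, j0))"

definition pivot :: "nat \<Rightarrow> nat" where
  "pivot c = (SOME i. i < n \<and> (X ^\<^sub>m c) $$ (i, j0) \<noteq> 0)"

definition pivot_dual :: "'a mat" where
  "pivot_dual = mat t n (\<lambda>(c, k). if k = pivot c then 1 / (X ^\<^sub>m c) $$ (pivot c, j0) else 0)"

definition free_rows :: "nat list" where
  "free_rows = sorted_list_of_set ({..<n} - pivot ` {..<t})"

definition free_incl :: "'a mat" where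
  "free_incl = mat n (n - t) (\<lambda>(k, j). if k = free_rows ! j then 1 else 0)"

definition proj :: "'a mat" where
  "proj = 1\<^sub>m n - chain * chain_dual"

definition compl_basis :: "'a mat" where
  "compl_basis = proj * free_incl"

definition pivot_compl :: "'a mat" where
  "pivot_compl = 1\<^sub>m n - chain * pivot_dual"

definition compl_dual :: "'a mat" where
  "compl_dual = transpose_mat free_incl * pivot_compl"

definition compl_op :: "'a mat" where
  "compl_op = compl_dual * (X * compl_basis)"

definition compl_degree :: "nat \<Rightarrow> nat" where
  "compl_degree j = d (free_rows ! j)"

definition basis_change :: "'a mat" where
  "basis_change = four_block_mat chain_dual (0\<^sub>m t 0) compl_dual (0\<^sub>m (n - t) 0)"

definition basis_change_inv :: "'a mat" where
  "basis_change_inv = four_block_mat chain compl_basis (0\<^sub>m 0 t) (0\<^sub>m 0 (n - t))"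

lemma pivot_nonzero: "c < t \<Longrightarrow> pivot c < n \<and> (X ^\<^sub>m c) $$ (pivot c, j0) \<noteq> 0"
  unfolding pivot_def using someI_ex[OF chain_nonzero] by blast

lemma pivot_degree: "c < t \<Longrightarrow> d (pivot c) = d j0 + c"
  using pivot_nonzero[of c] pow_degree[of c "pivot c" j0] j0 by auto

lemma inj_on_pivot: "inj_on pivot {..<t}"
proof (rule inj_onI)
  fix c c' assume c: "c \<in> {..<t}" and c': "c' \<in> {..<t}" and eq: "pivot c = pivot c'"
  have "d (pivot c) = d j0 + c" using c by (simp add: pivot_degree)
  moreover have "d (pivot c') = d j0 + c'" using c' by (simp add: pivot_degree)
  moreover have "d (pivot c) = d (pivot c')" using eq by (rule arg_cong)
  ultimately show "c = c'" by linarith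
qed

lemma pivots_subset: "pivot ` {..<t} \<subseteq> {..<n}"
  using pivot_nonzero by auto

lemma length_le: "t \<le> n"
  using card_mono[OF finite_lessThan pivots_subset] card_image[OF inj_on_pivot] by simp

lemma free_rows_spec: "length free_rows = n - t" "distinct free_rows" "set free_rows = {..<n} - pivot ` {..<t}"
  using card_Diff_subset[OF _ pivots_subset] card_image[OF inj_on_pivot] by (simp_all add: free_rows_def)

lemma free_rows_nth: "j < n - t \<Longrightarrow> free_rows ! j < n \<and> free_rows ! j \<notin> pivot ` {..<t}"
  using nth_mem[of j free_rows] free_rows_spec by auto

lemma dims [simp]:
  "dim_row chain = n" "dim_col chain = t" "dim_row chain_dual = t" "dim_col chain_dual = n"
  "dim_row pivot_dual = t" "dim_col pivot_dual = n" "dim_row free_incl = n" "dim_col free_incl = n - t"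
  "dim_row proj = n" "dim_col proj = n" "dim_row pivot_compl = n" "dim_col pivot_compl = n"
  "dim_row compl_basis = n" "dim_col compl_basis = n - t"
  "dim_row compl_dual = n - t" "dim_col compl_dual = n" "dim_row compl_op = n - t" "dim_col compl_op = n - t"
  "dim_row X = n" "dim_col X = n"
  using X_carrier
  by (auto simp: chain_def chain_dual_def pivot_dual_def free_incl_def proj_def pivot_compl_def
      compl_basis_def compl_dual_def compl_op_def)

lemma chain_carrier [simp]: "chain \<in> carrier_mat n t"
  and chain_dual_carrier [simp]: "chain_dual \<in> carrier_mat t n"
  and pivot_dual_carrier [simp]: "pivot_dual \<in> carrier_mat t n"
  and free_incl_carrier [simp]: "free_incl \<in> carrier_mat n (n - t)"
  and proj_carrier [simp]: "proj \<in> carrier_mat n n"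
  and pivot_compl_carrier [simp]: "pivot_compl \<in> carrier_mat n n"
  and compl_basis_carrier [simp]: "compl_basis \<in> carrier_mat n (n - t)"
  and compl_dual_carrier [simp]: "compl_dual \<in> carrier_mat (n - t) n"
  and compl_op_carrier [simp]: "compl_op \<in> carrier_mat (n - t) (n - t)"
  by (intro carrier_matI; simp)+

lemma chain_dual_chain: "chain_dual * chain = 1\<^sub>m t"
proof (rule eq_matI)
  fix c c' assume "c < dim_row (1\<^sub>m t :: 'a mat)" "c' < dim_col (1\<^sub>m t :: 'a mat)"
  then have cc: "c < t" "c' < t" by auto
  define top where "top = (X ^\<^sub>m (t - 1)) $$ (r, j0)"
  have "(chain_dual * chain) $$ (c, c') = (\<Sum>k<n. chain_dual $$ (c, k) * chain $$ (k, c'))"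
    by (rule index_mult_mat_sum) (use cc in auto)
  also have "\<dots> = (\<Sum>k<n. (X ^\<^sub>m (t - 1 - c)) $$ (r, k) * (X ^\<^sub>m c') $$ (k, j0)) / top"
    unfolding sum_divide_distrib by (rule sum.cong) (auto simp: chain_def chain_dual_def top_def cc)
  also have "\<dots> = (X ^\<^sub>m (t - 1 - c + c')) $$ (r, j0) / top"
    by (simp only: index_pow_mat_add[OF X_carrier r j0])
  also have "\<dots> = 1\<^sub>m t $$ (c, c')"
  proof (cases "c' < c")
    case True
    have "(X ^\<^sub>m (t - 1 - c + c')) $$ (r, j0) = 0"
    proof (rule ccontr)
      assume "(X ^\<^sub>m (t - 1 - c + c')) $$ (r, j0) \<noteq> 0"
      from pow_degree[OF this r j0] top_degree have "t - 1 = t - 1 - c + c'" by simp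
      with True cc show False by simp
    qed
    then show ?thesis using True cc by simp
  next
    case False
    then show ?thesis
      using pow_eq_0[of "t - 1 - c + c'"] r j0 cc X_pow_top by (cases "c = c'") (auto simp: top_def)
  qed
  finally show "(chain_dual * chain) $$ (c, c') = 1\<^sub>m t $$ (c, c')" .
qed auto

lemma pivot_dual_chain: "pivot_dual * chain = 1\<^sub>m t"
proof (rule eq_matI)
  fix c c' assume "c < dim_row (1\<^sub>m t :: 'a mat)" "c' < dim_col (1\<^sub>m t :: 'a mat)"
  then have cc: "c < t" "c' < t" by auto
  have "(pivot_dual * chain) $$ (c, c') = (\<Sum>k<n. pivot_dual $$ (c, k) * chain $$ (k, c'))"
    by (rule index_mult_mat_sum) (use cc in auto)
  also have "\<dots> = pivot_dual $$ (c, pivot c) * chain $$ (pivot c, c')"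
    by (rule sum_lessThan_eq_single) (use pivot_nonzero[OF cc(1)] cc in \<open>auto simp: pivot_dual_def\<close>)
  also have "\<dots> = (X ^\<^sub>m c') $$ (pivot c, j0) / (X ^\<^sub>m c) $$ (pivot c, j0)"
    using pivot_nonzero[OF cc(1)] cc by (simp add: pivot_dual_def chain_def)
  also have "\<dots> = 1\<^sub>m t $$ (c, c')"
  proof (cases "c = c'")
    case False
    then have "(X ^\<^sub>m c') $$ (pivot c, j0) = 0"
      using pow_degree[of c' "pivot c" j0] pivot_nonzero[OF cc(1)] pivot_degree[OF cc(1)] j0 by auto
    then show ?thesis using False cc by simp
  qed (use pivot_nonzero cc in simp)
  finally show "(pivot_dual * chain) $$ (c, c') = 1\<^sub>m t $$ (c, c')" .
qed auto

lemma pivot_dual_free_incl: "pivot_dual * free_incl = 0\<^sub>m t (n - t)"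
proof (rule eq_matI)
  fix c j assume "c < dim_row (0\<^sub>m t (n - t) :: 'a mat)" "j < dim_col (0\<^sub>m t (n - t) :: 'a mat)"
  then have cj: "c < t" "j < n - t" by auto
  have "(pivot_dual * free_incl) $$ (c, j) = (\<Sum>k<n. pivot_dual $$ (c, k) * free_incl $$ (k, j))"
    by (rule index_mult_mat_sum) (use cj in auto)
  also have "\<dots> = 0"
    using free_rows_nth[OF cj(2)] cj by (intro sum.neutral) (auto simp: pivot_dual_def free_incl_def)
  finally show "(pivot_dual * free_incl) $$ (c, j) = 0\<^sub>m t (n - t) $$ (c, j)" using cj by simp
qed auto

lemma free_incl_orthonormal: "transpose_mat free_incl * free_incl = 1\<^sub>m (n - t)"
proof (rule eq_matI)
  fix i j assume "i < dim_row (1\<^sub>m (n - t) :: 'a mat)" "j < dim_col (1\<^sub>m (n - t) :: 'a mat)"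
  then have ij: "i < n - t" "j < n - t" by auto
  have "(transpose_mat free_incl * free_incl) $$ (i, j) =
      (\<Sum>k<n. transpose_mat free_incl $$ (i, k) * free_incl $$ (k, j))"
    by (rule index_mult_mat_sum) (use ij in auto)
  also have "\<dots> = transpose_mat free_incl $$ (i, free_rows ! i) * free_incl $$ (free_rows ! i, j)"
    by (rule sum_lessThan_eq_single) (use ij free_rows_nth in \<open>auto simp: free_incl_def\<close>)
  also have "\<dots> = 1\<^sub>m (n - t) $$ (i, j)"
    using ij free_rows_nth free_rows_spec(1,2) by (auto simp: free_incl_def nth_eq_iff_index_eq)
  finally show "(transpose_mat free_incl * free_incl) $$ (i, j) = 1\<^sub>m (n - t) $$ (i, j)" .
qed auto

lemma X_chain: "X * chain = chain * shift_mat t"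
proof (rule eq_matI)
  fix i c assume "i < dim_row (chain * shift_mat t)" "c < dim_col (chain * shift_mat t)"
  then have ic: "i < n" "c < t" by auto
  have "(X * chain) $$ (i, c) = (\<Sum>k<n. X $$ (i, k) * chain $$ (k, c))"
    by (rule index_mult_mat_sum) (use ic in auto)
  also have "\<dots> = (\<Sum>k<n. X $$ (i, k) * (X ^\<^sub>m c) $$ (k, j0))"
    by (rule sum.cong) (use ic in \<open>auto simp: chain_def\<close>)
  also have "\<dots> = (X ^\<^sub>m Suc c) $$ (i, j0)"
    by (rule index_pow_mat_Suc_left[symmetric, OF X_carrier ic(1) j0])
  also have "\<dots> = (chain * shift_mat t) $$ (i, c)"
  proof -
    have "(chain * shift_mat t) $$ (i, c) = (\<Sum>k<t. chain $$ (i, k) * shift_mat t $$ (k, c))"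
      by (rule index_mult_mat_sum) (use ic in auto)
    also have "\<dots> = (if Suc c < t then chain $$ (i, Suc c) else 0)"
      using ic by (auto simp: sum_lessThan_eq_single[of "Suc c"] intro!: sum.neutral)
    also have "\<dots> = (X ^\<^sub>m Suc c) $$ (i, j0)"
    proof (cases "Suc c < t")
      case False
      then have "X ^\<^sub>m Suc c = 0\<^sub>m n n" by (intro pow_eq_0) simp
      then show ?thesis using False ic j0 by (simp del: pow_mat.simps)
    qed (use ic in \<open>simp add: chain_def\<close>)
    finally show ?thesis by simp
  qed
  finally show "(X * chain) $$ (i, c) = (chain * shift_mat t) $$ (i, c)" .
qed auto

lemma chain_dual_X: "chain_dual * X = shift_mat t * chain_dual"
proof (rule eq_matI)
  fix c k assume "c < dim_row (shift_mat t * chain_dual)" "k < dim_col (shift_mat t * chain_dual)"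
  then have ck: "c < t" "k < n" by auto
  define top where "top = (X ^\<^sub>m (t - 1)) $$ (r, j0)"
  have "(chain_dual * X) $$ (c, k) = (\<Sum>q<n. chain_dual $$ (c, q) * X $$ (q, k))"
    by (rule index_mult_mat_sum) (use ck in auto)
  also have "\<dots> = (\<Sum>q<n. (X ^\<^sub>m (t - 1 - c)) $$ (r, q) * X $$ (q, k)) / top"
    unfolding sum_divide_distrib by (rule sum.cong) (use ck in \<open>auto simp: chain_dual_def top_def\<close>)
  also have "\<dots> = (X ^\<^sub>m Suc (t - 1 - c)) $$ (r, k) / top"
    by (simp only: index_pow_mat_Suc[OF X_carrier r ck(2)])
  also have "\<dots> = (shift_mat t * chain_dual) $$ (c, k)"
  proof -
    have "(shift_mat t * chain_dual) $$ (c, k) = (\<Sum>q<t. shift_mat t $$ (c, q) * chain_dual $$ (q, k))"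
      by (rule index_mult_mat_sum) (use ck in auto)
    also have "\<dots> = (if c = 0 then 0 else chain_dual $$ (c - 1, k))"
      using ck by (auto simp: sum_lessThan_eq_single[of "c - 1"] intro!: sum.neutral)
    also have "\<dots> = (X ^\<^sub>m Suc (t - 1 - c)) $$ (r, k) / top"
    proof (cases "c = 0")
      case True
      then have "X ^\<^sub>m Suc (t - 1 - c) = 0\<^sub>m n n" using length_pos by (intro pow_eq_0) simp
      then show ?thesis using True ck r by (simp del: pow_mat.simps)
    next
      case False
      then have "t - 1 - (c - 1) = Suc (t - 1 - c)" using ck by simp
      then show ?thesis using False ck by (simp add: chain_dual_def top_def del: pow_mat.simps)
    qed
    finally show ?thesis by simp
  qed
  finally show "(chain_dual * X) $$ (c, k) = (shift_mat t * chain_dual) $$ (c, k)" .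
qed auto

lemma chain_dual_proj: "chain_dual * proj = 0\<^sub>m t n"
proof -
  have "chain_dual * proj = chain_dual * 1\<^sub>m n - chain_dual * (chain * chain_dual)"
    unfolding proj_def by (rule mult_minus_distrib_mat) auto
  also have "chain_dual * (chain * chain_dual) = (chain_dual * chain) * chain_dual"
    by (rule assoc_mult_mat[symmetric]) auto
  finally show ?thesis by (simp add: chain_dual_chain)
qed

lemma pivot_compl_chain: "pivot_compl * chain = 0\<^sub>m n t"
proof -
  have "pivot_compl * chain = 1\<^sub>m n * chain - (chain * pivot_dual) * chain"
    unfolding pivot_compl_def by (rule minus_mult_distrib_mat) auto
  also have "(chain * pivot_dual) * chain = chain * (pivot_dual * chain)"
    by (rule assoc_mult_mat) auto
  finally show ?thesis by (simp add: pivot_dual_chain)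
qed

lemma pivot_compl_proj: "pivot_compl * proj = pivot_compl"
proof -
  have "pivot_compl * proj = pivot_compl * 1\<^sub>m n - pivot_compl * (chain * chain_dual)"
    unfolding proj_def by (rule mult_minus_distrib_mat) auto
  also have "pivot_compl * (chain * chain_dual) = (pivot_compl * chain) * chain_dual"
    by (rule assoc_mult_mat[symmetric]) auto
  finally show ?thesis by (simp add: pivot_compl_chain)
qed

lemma compl_dual_chain: "compl_dual * chain = 0\<^sub>m (n - t) t"
  unfolding compl_dual_def
  by (simp add: assoc_mult_mat[of _ "n - t" n _ n _ t] pivot_compl_chain)

lemma chain_dual_compl_basis: "chain_dual * compl_basis = 0\<^sub>m t (n - t)"
  unfolding compl_basis_def
  by (simp add: assoc_mult_mat[symmetric, of _ t n _ n _ "n - t"] chain_dual_proj)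

lemma compl_dual_compl_basis: "compl_dual * compl_basis = 1\<^sub>m (n - t)"
proof -
  have "compl_dual * compl_basis = transpose_mat free_incl * (pivot_compl * (proj * free_incl))"
    unfolding compl_dual_def compl_basis_def by (rule assoc_mult_mat) auto
  also have "pivot_compl * (proj * free_incl) = (pivot_compl * proj) * free_incl"
    by (rule assoc_mult_mat[symmetric]) auto
  also have "\<dots> = pivot_compl * free_incl" by (simp only: pivot_compl_proj)
  also have "\<dots> = 1\<^sub>m n * free_incl - (chain * pivot_dual) * free_incl"
    unfolding pivot_compl_def by (rule minus_mult_distrib_mat) auto
  also have "(chain * pivot_dual) * free_incl = chain * (pivot_dual * free_incl)"
    by (rule assoc_mult_mat) auto
  finally show ?thesis by (simp add: pivot_dual_free_incl free_incl_orthonormal)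
qed

lemma basis_change_carrier [simp]: "basis_change \<in> carrier_mat n n"
  by (rule carrier_matI) (use length_le in \<open>simp_all add: basis_change_def\<close>)

lemma basis_change_inv_carrier [simp]: "basis_change_inv \<in> carrier_mat n n"
  by (rule carrier_matI) (use length_le in \<open>simp_all add: basis_change_inv_def\<close>)

lemma basis_change_mult_inv: "basis_change * basis_change_inv = 1\<^sub>m n"
proof -
  have "basis_change * basis_change_inv = four_block_mat (chain_dual * chain + 0\<^sub>m t 0 * 0\<^sub>m 0 t)
      (chain_dual * compl_basis + 0\<^sub>m t 0 * 0\<^sub>m 0 (n - t)) (compl_dual * chain + 0\<^sub>m (n - t) 0 * 0\<^sub>m 0 t)
      (compl_dual * compl_basis + 0\<^sub>m (n - t) 0 * 0\<^sub>m 0 (n - t))"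
    unfolding basis_change_def basis_change_inv_def by (rule mult_four_block_mat) auto
  also have "\<dots> = four_block_mat (1\<^sub>m t) (0\<^sub>m t (n - t)) (0\<^sub>m (n - t) t) (1\<^sub>m (n - t))"
    by (simp add: chain_dual_chain chain_dual_compl_basis compl_dual_chain compl_dual_compl_basis)
  also have "\<dots> = 1\<^sub>m n" using length_le by simp
  finally show ?thesis .
qed

lemma basis_change_inv_mult: "basis_change_inv * basis_change = 1\<^sub>m n"
  by (rule mat_mult_left_right_inverse[OF _ _ basis_change_mult_inv]) simp_all

lemma basis_change_conj: "basis_change * X * basis_change_inv =
    four_block_mat (shift_mat t) (0\<^sub>m t (n - t)) (0\<^sub>m (n - t) t) compl_op"
proof -
  have "X * basis_change_inv = four_block_mat X (0\<^sub>m n 0) (0\<^sub>m 0 n) (0\<^sub>m 0 0) * basis_change_inv"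
    using four_block_mat_empty[OF X_carrier] by simp
  also have "\<dots> = four_block_mat (X * chain) (X * compl_basis) (0\<^sub>m 0 t) (0\<^sub>m 0 (n - t))"
    unfolding basis_change_inv_def by (subst mult_four_block_mat) (auto simp: X_carrier)
  finally have "basis_change * X * basis_change_inv =
      basis_change * four_block_mat (X * chain) (X * compl_basis) (0\<^sub>m 0 t) (0\<^sub>m 0 (n - t))"
    by (simp add: assoc_mult_mat[of _ n n _ n _ n] X_carrier)
  also have "\<dots> = four_block_mat (chain_dual * (X * chain)) (chain_dual * (X * compl_basis))
      (compl_dual * (X * chain)) (compl_dual * (X * compl_basis))"
    unfolding basis_change_def by (subst mult_four_block_mat) (auto simp: X_carrier)
  also have "chain_dual * (X * chain) = shift_mat t"
    by (simp add: X_chain assoc_mult_mat[symmetric, of _ t n _ t _ t] chain_dual_chain)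
  also have "chain_dual * (X * compl_basis) = 0\<^sub>m t (n - t)"
    by (simp add: assoc_mult_mat[symmetric, of _ t n _ n _ "n - t"] X_carrier chain_dual_X
        assoc_mult_mat[of _ t t _ n _ "n - t"] chain_dual_compl_basis)
  also have "compl_dual * (X * chain) = 0\<^sub>m (n - t) t"
    by (simp add: X_chain assoc_mult_mat[symmetric, of _ "n - t" n _ t _ t] compl_dual_chain)
  finally show ?thesis unfolding compl_op_def .
qed

lemma chain_homogeneous: "homogeneous_mat d (\<lambda>c. d j0 + c) 0 chain"
  by (rule homogeneous_matI) (auto simp: chain_def intro: pow_degree[OF _ _ j0])

lemma chain_dual_homogeneous: "homogeneous_mat (\<lambda>c. d j0 + c) d 0 chain_dual"
proof (rule homogeneous_matI)
  fix c k assume ck: "c < dim_row chain_dual" "k < dim_col chain_dual" and "chain_dual $$ (c, k) \<noteq> 0"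
  then have "(X ^\<^sub>m (t - 1 - c)) $$ (r, k) \<noteq> 0" by (simp add: chain_dual_def)
  from pow_degree[OF this r] ck top_degree show "d j0 + c = d k + 0" by simp
qed

lemma pivot_dual_homogeneous: "homogeneous_mat (\<lambda>c. d j0 + c) d 0 pivot_dual"
  by (rule homogeneous_matI) (auto simp: pivot_dual_def pivot_degree split: if_splits)

lemma free_incl_homogeneous: "homogeneous_mat d compl_degree 0 free_incl"
  and free_incl_transpose_homogeneous: "homogeneous_mat compl_degree d 0 (transpose_mat free_incl)"
  by (auto simp: homogeneous_mat_def free_incl_def compl_degree_def split: if_splits)

lemma proj_homogeneous: "homogeneous_mat d d 0 proj"
  unfolding proj_def
  by (rule homogeneous_mat_diff[OF homogeneous_mat_one])
    (use homogeneous_mat_mult[OF chain_homogeneous chain_dual_homogeneous]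
      mult_carrier_mat[OF chain_carrier chain_dual_carrier] in simp_all)

lemma compl_dual_homogeneous: "homogeneous_mat compl_degree d 0 compl_dual"
proof -
  have "homogeneous_mat d d 0 pivot_compl"
    unfolding pivot_compl_def
    by (rule homogeneous_mat_diff[OF homogeneous_mat_one])
      (use homogeneous_mat_mult[OF chain_homogeneous pivot_dual_homogeneous]
        mult_carrier_mat[OF chain_carrier pivot_dual_carrier] in simp_all)
  from homogeneous_mat_mult[OF free_incl_transpose_homogeneous this] show ?thesis
    unfolding compl_dual_def by simp
qed

lemma compl_op_homogeneous: "homogeneous_mat compl_degree compl_degree 1 compl_op"
proof -
  have "homogeneous_mat d compl_degree 0 compl_basis"
    unfolding compl_basis_def using homogeneous_mat_mult[OF proj_homogeneous free_incl_homogeneous] by simp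
  then have "homogeneous_mat d compl_degree 1 (X * compl_basis)"
    using homogeneous_mat_mult[OF X_homogeneous] by simp
  from homogeneous_mat_mult[OF compl_dual_homogeneous this] show ?thesis
    unfolding compl_op_def by simp
qed

lemma basis_change_homogeneous:
  "homogeneous_mat (\<lambda>i. if i < t then d j0 + i else compl_degree (i - t)) d 0 basis_change"
proof -
  have "homogeneous_mat (\<lambda>i. if i < t then d j0 + i else compl_degree (i - t))
      (\<lambda>j. if j < n then d j else d (j - n)) 0 basis_change"
    unfolding basis_change_def
    by (rule homogeneous_mat_four_block[where na = t and ma = n and mb = 0 and nb = "n - t"])
      (simp_all add: chain_dual_homogeneous compl_dual_homogeneous homogeneous_mat_zero)
  then show ?thesis
    by (rule homogeneous_mat_cong[rotated 2]) (simp_all add: basis_change_def)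
qed

lemma basis_change_similar:
  "similar_mat_wit (four_block_mat (shift_mat t) (0\<^sub>m t (n - t)) (0\<^sub>m (n - t) t) compl_op)
    X basis_change basis_change_inv"
proof (rule similar_mat_witI[of _ _ n])
  show "four_block_mat (shift_mat t) (0\<^sub>m t (n - t)) (0\<^sub>m (n - t) t) compl_op \<in> carrier_mat n n"
    using four_block_carrier_mat[OF shift_mat_carrier(1)[of t] compl_op_carrier] length_le by simp
qed (simp_all add: basis_change_mult_inv basis_change_inv_mult basis_change_conj X_carrier)

end

section \<open>Graded Jordan decomposition\<close>

fun jordan_blocks :: "(nat \<times> nat) list \<Rightarrow> 'a::{zero,one} mat" where
  "jordan_blocks [] = 0\<^sub>m 0 0"
| "jordan_blocks ((l, e) # L) = four_block_mat (shift_mat l) (0\<^sub>m l (sum_list (map fst L)))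
    (0\<^sub>m (sum_list (map fst L)) l) (jordan_blocks L)"

fun block_degree :: "(nat \<times> nat) list \<Rightarrow> nat \<Rightarrow> nat" where
  "block_degree [] i = 0"
| "block_degree ((l, e) # L) i = (if i < l then e + i else block_degree L (i - l))"

lemma dim_jordan_blocks [simp]:
  "dim_row (jordan_blocks L) = sum_list (map fst L)" "dim_col (jordan_blocks L) = sum_list (map fst L)"
  by (induction L rule: jordan_blocks.induct) auto

lemma block_degree_block:
  "(l, e) \<in> set L \<Longrightarrow> \<exists>off. off + l \<le> sum_list (map fst L) \<and> (\<forall>i<l. block_degree L (off + i) = e + i)"
proof (induction L)
  case (Cons b L)
  obtain l' e' where b: "b = (l', e')" by (cases b)
  show ?case
  proof (cases "(l, e) = b")
    case True
    then show ?thesis using b by (intro exI[of _ 0]) auto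
  next
    case False
    then obtain off where "off + l \<le> sum_list (map fst L)" "\<forall>i<l. block_degree L (off + i) = e + i"
      using Cons by auto
    then show ?thesis using b by (intro exI[of _ "l' + off"]) auto
  qed
qed simp

definition graded_jordan_wit ::
  "(nat \<times> nat) list \<Rightarrow> (nat \<Rightarrow> nat) \<Rightarrow> 'a::semiring_1 mat \<Rightarrow> 'a mat \<Rightarrow> 'a mat \<Rightarrow> bool" where
  "graded_jordan_wit L d X P Q \<longleftrightarrow> (\<forall>(l, e)\<in>set L. 0 < l) \<and>
     similar_mat_wit (jordan_blocks L) X P Q \<and> homogeneous_mat (block_degree L) d 0 P"

lemma graded_jordan_witD:
  assumes "graded_jordan_wit L d X P Q" "X \<in> carrier_mat n n"
  shows "P \<in> carrier_mat n n" "Q \<in> carrier_mat n n" "P * Q = 1\<^sub>m n" "Q * P = 1\<^sub>m n"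
    "jordan_blocks L = P * X * Q" "sum_list (map fst L) = n"
    "homogeneous_mat (block_degree L) d 0 P"
proof -
  have sim: "similar_mat_wit X (jordan_blocks L) Q P"
    using assms(1) by (auto simp: graded_jordan_wit_def intro: similar_mat_wit_sym)
  note wit = similar_mat_witD2[OF assms(2) sim]
  show "P \<in> carrier_mat n n" "Q \<in> carrier_mat n n" "P * Q = 1\<^sub>m n" "Q * P = 1\<^sub>m n"
    using wit by auto
  show "sum_list (map fst L) = n" using wit(5) by (metis carrier_matD(1) dim_jordan_blocks(1))
  show "jordan_blocks L = P * X * Q" "homogeneous_mat (block_degree L) d 0 P"
    using assms(1) by (auto simp: graded_jordan_wit_def similar_mat_wit_def Let_def)
qed

lemma graded_jordan_wit_Cons:
  fixes X :: "'a::comm_ring_1 mat"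
  assumes block_sim: "similar_mat_wit (four_block_mat (shift_mat l) (0\<^sub>m l m) (0\<^sub>m m l) Y) X P Q"
    and hom: "homogeneous_mat (\<lambda>i. if i < l then e + i else dY (i - l)) d 0 P"
    and Y: "Y \<in> carrier_mat m m" and l: "0 < l"
    and wit: "graded_jordan_wit L dY Y P' Q'"
  shows "graded_jordan_wit ((l, e) # L) d X
    (four_block_mat (1\<^sub>m l) (0\<^sub>m l m) (0\<^sub>m m l) P' * P) (Q * four_block_mat (1\<^sub>m l) (0\<^sub>m l m) (0\<^sub>m m l) Q')"
proof -
  note W = graded_jordan_witD[OF wit Y]
  have "similar_mat_wit (four_block_mat (shift_mat l) (0\<^sub>m l m) (0\<^sub>m m l) (jordan_blocks L))
      (four_block_mat (shift_mat l) (0\<^sub>m l m) (0\<^sub>m m l) Y)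
      (four_block_mat (1\<^sub>m l) (0\<^sub>m l m) (0\<^sub>m m l) P') (four_block_mat (1\<^sub>m l) (0\<^sub>m l m) (0\<^sub>m m l) Q')"
    using W wit unfolding graded_jordan_wit_def
    by (intro similar_mat_wit_four_block[OF similar_mat_wit_refl[OF shift_mat_carrier(1)]]) auto
  then have sim: "similar_mat_wit (jordan_blocks ((l, e) # L)) X
      (four_block_mat (1\<^sub>m l) (0\<^sub>m l m) (0\<^sub>m m l) P' * P) (Q * four_block_mat (1\<^sub>m l) (0\<^sub>m l m) (0\<^sub>m m l) Q')"
    using similar_mat_wit_trans[OF _ block_sim] W(6) by simp
  have "homogeneous_mat (\<lambda>i. if i < l then e + i else block_degree L (i - l))
      (\<lambda>j. if j < l then e + j else dY (j - l)) 0 (four_block_mat (1\<^sub>m l) (0\<^sub>m l m) (0\<^sub>m m l) P')"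
    by (rule homogeneous_mat_four_block[where na = l and ma = l and nb = m and mb = m])
      (use W in \<open>simp_all add: homogeneous_mat_one homogeneous_mat_zero\<close>)
  moreover have "P \<in> carrier_mat (l + m) (l + m)"
    using similar_mat_witD2(6)[OF four_block_carrier_mat[OF shift_mat_carrier(1) Y] block_sim] .
  ultimately have "homogeneous_mat (\<lambda>i. if i < l then e + i else block_degree L (i - l)) d 0
      (four_block_mat (1\<^sub>m l) (0\<^sub>m l m) (0\<^sub>m m l) P' * P)"
    using homogeneous_mat_mult[OF _ hom] W(1) by simp
  moreover have "block_degree ((l, e) # L) = (\<lambda>i. if i < l then e + i else block_degree L (i - l))"
    by (rule ext) simp
  ultimately have "homogeneous_mat (block_degree ((l, e) # L)) d 0
      (four_block_mat (1\<^sub>m l) (0\<^sub>m l m) (0\<^sub>m m l) P' * P)" by simp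
  then show ?thesis using sim l wit by (simp add: graded_jordan_wit_def)
qed

lemma (in jordan_chain) graded_jordan_wit_extend:
  "graded_jordan_wit L compl_degree compl_op P' Q' \<Longrightarrow> \<exists>P Q. graded_jordan_wit ((t, d j0) # L) d X P Q"
  using graded_jordan_wit_Cons[OF basis_change_similar basis_change_homogeneous compl_op_carrier length_pos] by blast

lemma homogeneous_mat_jordan_chain:
  fixes X :: "'a::field_char_0 mat"
  assumes X: "X \<in> carrier_mat n n" and hom: "homogeneous_mat d d 1 X" and n: "0 < n"
  obtains t r j0 where "jordan_chain X n t d r j0"
proof -
  have "X ^\<^sub>m Suc (Max (d ` {..<n})) = 0\<^sub>m n n"
    by (rule homogeneous_mat_pow_eq_0[OF hom X, where D = "Max (d ` {..<n})"]) auto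
  define t where "t = (LEAST k. X ^\<^sub>m k = 0\<^sub>m n n)"
  have t: "X ^\<^sub>m t = 0\<^sub>m n n" unfolding t_def by (rule LeastI) fact
  have nonzero: "X ^\<^sub>m (t - 1) \<noteq> 0\<^sub>m n n"
  proof
    assume "X ^\<^sub>m (t - 1) = 0\<^sub>m n n"
    then have "t \<le> t - 1" unfolding t_def by (rule Least_le)
    then have "t = 0" by linarith
    then have "X ^\<^sub>m 0 = 0\<^sub>m n n" using t by simp
    then have "(1\<^sub>m n :: 'a mat) $$ (0, 0) = 0\<^sub>m n n $$ (0, 0)" using X by (simp add: carrier_matD)
    then show False using n by simp
  qed
  have "\<exists>r<n. \<exists>j0<n. (X ^\<^sub>m (t - 1)) $$ (r, j0) \<noteq> 0"
  proof (rule ccontr)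
    assume "\<not> ?thesis"
    then have "X ^\<^sub>m (t - 1) = 0\<^sub>m n n" using X by (intro eq_matI) auto
    with nonzero show False ..
  qed
  then obtain r j0 where "r < n" "j0 < n" "(X ^\<^sub>m (t - 1)) $$ (r, j0) \<noteq> 0" by blast
  then show ?thesis using X hom t by (intro that[of t r j0] jordan_chain.intro)
qed

theorem graded_jordan_decomposition:
  fixes X :: "'a::field_char_0 mat"
  assumes "X \<in> carrier_mat n n" "homogeneous_mat d d 1 X"
  shows "\<exists>L P Q. graded_jordan_wit L d X P Q"
  using assms
proof (induction n arbitrary: X d rule: less_induct)
  case (less n)
  show ?case
  proof (cases "n = 0")
    case True
    have "similar_mat_wit (jordan_blocks []) X (1\<^sub>m 0) (1\<^sub>m 0)"
      using less.prems True by (intro similar_mat_witI[of _ _ 0]) (auto intro!: eq_matI)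
    then have "graded_jordan_wit [] d X (1\<^sub>m 0) (1\<^sub>m 0)"
      by (simp add: graded_jordan_wit_def homogeneous_mat_def)
    then show ?thesis by blast
  next
    case False
    then obtain t r j0 where "jordan_chain X n t d r j0"
      using homogeneous_mat_jordan_chain[OF less.prems] by auto
    then interpret jordan_chain X n t d r j0 .
    have "n - t < n" using length_pos False by simp
    then obtain L P Q where "graded_jordan_wit L compl_degree compl_op P Q"
      using less.IH[OF _ compl_op_carrier compl_op_homogeneous] by blast
    then show ?thesis using graded_jordan_wit_extend by blast
  qed
qed

lemma (in jordan_chain) graded_jordan_decomposition_chain:
  "\<exists>L P Q. graded_jordan_wit ((t, d j0) # L) d X P Q"
  using graded_jordan_decomposition[OF compl_op_carrier compl_op_homogeneous] graded_jordan_wit_extend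
  by blast

text \<open>A block longer than \<open>D\<close> has to start in degree 0, next to the first block; but degree 0 is
  one-dimensional.\<close>
lemma graded_jordan_wit_block_length_le:
  fixes X :: "'a::field_char_0 mat"
  assumes wit: "graded_jordan_wit ((t, 0) # L) d X P Q" and X: "X \<in> carrier_mat n n" and t: "0 < t"
    and bound: "\<And>i. i < n \<Longrightarrow> d i \<le> D" and unique: "\<And>i. i < n \<Longrightarrow> d i = 0 \<Longrightarrow> i = 0"
    and block: "(l, e) \<in> set L"
  shows "l \<le> D"
proof (rule ccontr)
  assume "\<not> l \<le> D"
  note W = graded_jordan_witD[OF wit X]
  have homQ: "homogeneous_mat d (block_degree ((t, 0) # L)) 0 Q"
    by (rule homogeneous_mat_inverse[OF W(7,1,2,3,4)])
  obtain off where off: "off + l \<le> sum_list (map fst L)" "\<And>i. i < l \<Longrightarrow> block_degree L (off + i) = e + i"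
    using block_degree_block[OF block] by blast
  have pos: "t + off + i < n" "block_degree ((t, 0) # L) (t + off + i) = e + i" if "i < l" for i
    using off W(6) that by auto
  obtain k where "k < n" "block_degree ((t, 0) # L) (t + off + (l - 1)) = d k"
    using homogeneous_mat_row_degree[OF W(7,1,2,3) pos(1)[of "l - 1"]] \<open>\<not> l \<le> D\<close> by auto
  then have "e = 0" using pos(2)[of "l - 1"] bound[of k] \<open>\<not> l \<le> D\<close> by simp
  then have "t + off = 0"
    using homogeneous_mat_degree_unique[OF W(7) homQ W(1,2,3) unique, of 0 "t + off" 0]
      pos[of 0] \<open>\<not> l \<le> D\<close> t W(6) by simp
  then show False using t by simp
qed

section \<open>Gaussian binomial coefficients at a root of unity\<close>

fun qbinom :: "'a::comm_ring_1 \<Rightarrow> nat \<Rightarrow> nat \<Rightarrow> 'a" where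
  "qbinom c 0 k = (if k = 0 then 1 else 0)"
| "qbinom c (Suc n) 0 = 1"
| "qbinom c (Suc n) (Suc k) = c ^ Suc k * qbinom c n (Suc k) + qbinom c n k"

lemma qbinom_0_right [simp]: "qbinom c n 0 = 1"
  by (cases n) auto

lemma qbinom_eq_0: "n < k \<Longrightarrow> qbinom c n k = 0"
proof (induction n arbitrary: k)
  case (Suc n)
  then obtain k' where "k = Suc k'" by (cases k) auto
  then show ?case using Suc by simp
qed simp

lemma qbinom_self [simp]: "qbinom c n n = 1"
  by (induction n) (auto simp: qbinom_eq_0)

lemma qbinom_Suc_Suc':
  "k \<le> n \<Longrightarrow> qbinom c (Suc n) (Suc k) = c ^ (n - k) * qbinom c n k + qbinom c n (Suc k)"
proof (induction n arbitrary: k)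
  case (Suc n)
  show ?case
  proof (cases "k = Suc n")
    case False
    then have k: "k \<le> n" using Suc.prems by simp
    have IH: "qbinom c (Suc n) (Suc k) = c ^ (n - k) * qbinom c n k + qbinom c n (Suc k)"
      by (rule Suc.IH[OF k])
    show ?thesis
    proof (cases k)
      case 0
      then show ?thesis using IH by (simp add: algebra_simps)
    next
      case (Suc k')
      have IH': "qbinom c (Suc n) k = c ^ Suc (n - k) * qbinom c n k' + qbinom c n k"
        using Suc.IH[of k'] Suc k by (simp add: Suc_diff_Suc)
      have pow: "c ^ Suc k * c ^ (n - k) = c ^ Suc (n - k) * c ^ k"
        using k by (simp flip: power_add)
      have "qbinom c (Suc (Suc n)) (Suc k) = c ^ Suc k * qbinom c (Suc n) (Suc k) + qbinom c (Suc n) k"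
        by (simp only: qbinom.simps(3))
      also have "\<dots> = c ^ Suc k * (c ^ (n - k) * qbinom c n k + qbinom c n (Suc k))
          + (c ^ Suc (n - k) * qbinom c n k' + qbinom c n k)"
        by (simp only: IH IH')
      also have "\<dots> = c ^ Suc (n - k) * (c ^ k * qbinom c n k + qbinom c n k')
          + (c ^ Suc k * qbinom c n (Suc k) + qbinom c n k)" (is "?L = ?R")
      proof -
        have "?L - ?R = (c ^ Suc k * c ^ (n - k) - c ^ Suc (n - k) * c ^ k) * qbinom c n k"
          by (simp add: algebra_simps)
        also have "\<dots> = 0" by (simp only: pow diff_self mult_zero_left)
        finally show ?thesis by (simp only: right_minus_eq)
      qed
      also have "\<dots> = c ^ (Suc n - k) * qbinom c (Suc n) k + qbinom c (Suc n) (Suc k)"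
      proof -
        have "Suc n - k = Suc (n - k)" using k by simp
        moreover have "qbinom c (Suc n) k = c ^ k * qbinom c n k + qbinom c n k'" using Suc by simp
        moreover have "qbinom c (Suc n) (Suc k) = c ^ Suc k * qbinom c n (Suc k) + qbinom c n k" by simp
        ultimately show ?thesis by (simp only:)
      qed
      finally show ?thesis .
    qed
  qed (simp add: qbinom_eq_0)
qed simp

lemma qbinom_Suc_weighted:
  "c ^ j * qbinom c n j * x (Suc (n - j)) + (if 0 < j then qbinom c n (j - 1) * x (n - (j - 1)) else 0)
    = qbinom c (Suc n) j * x (Suc n - j)"
proof (cases j)
  case (Suc j')
  show ?thesis
  proof (cases "j \<le> n")
    case True
    then have "Suc (n - j) = Suc n - j" "n - (j - 1) = Suc n - j" using Suc by auto
    then show ?thesis using Suc by (simp add: algebra_simps)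
  qed (use Suc in \<open>simp add: qbinom_eq_0\<close>)
qed simp

context
  fixes c :: "'a::field" and s :: nat
  assumes order: "c ^ s = 1" "\<And>k. 0 < k \<Longrightarrow> k < s \<Longrightarrow> c ^ k \<noteq> 1"
begin

lemma qbinom_root_of_unity_eq_0: "0 < k \<Longrightarrow> k < s \<Longrightarrow> qbinom c s k = 0"
proof (induction k)
  case (Suc k)
  have "qbinom c (Suc s) (Suc k) = c ^ Suc k * qbinom c s (Suc k) + qbinom c s k" by simp
  moreover have "qbinom c (Suc s) (Suc k) = c ^ (s - k) * qbinom c s k + qbinom c s (Suc k)"
    using Suc.prems by (intro qbinom_Suc_Suc') simp
  ultimately have "(c ^ Suc k - 1) * qbinom c s (Suc k) = (c ^ (s - k) - 1) * qbinom c s k"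
    by (simp add: algebra_simps)
  also have "\<dots> = 0" using Suc order(1) by (cases k) auto
  finally show ?case using order(2)[of "Suc k"] Suc.prems by simp
qed simp

text \<open>The \<open>q\<close>-Lucas theorem for \<open>k \<le> s\<close>.\<close>
lemma qbinom_root_of_unity_mod: "0 < s \<Longrightarrow> k < s \<Longrightarrow> qbinom c n k = qbinom c (n mod s) k"
proof (induction n arbitrary: k)
  case (Suc n)
  show ?case
  proof (cases k)
    case (Suc k')
    have rec: "qbinom c (Suc n) k = c ^ k * qbinom c (n mod s) k + qbinom c (n mod s) k'"
      using Suc.IH[of k] Suc.IH[of k'] Suc.prems Suc by simp
    consider "Suc (n mod s) < s" | "Suc (n mod s) = s"
      using mod_less_divisor[OF Suc.prems(1), of n] by linarith
    then show ?thesis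
    proof cases
      case 1
      then show ?thesis using rec Suc by (simp add: mod_Suc)
    next
      case 2
      then have "qbinom c s k = c ^ k * qbinom c (n mod s) k + qbinom c (n mod s) k'"
        using Suc by (metis qbinom.simps(3))
      then show ?thesis using rec 2 Suc Suc.prems qbinom_root_of_unity_eq_0[of k] by (simp add: mod_Suc)
    qed
  qed simp
qed simp

lemma qbinom_root_of_unity_order: "0 < s \<Longrightarrow> qbinom c n s = of_nat (n div s)"
proof (induction n)
  case (Suc n)
  obtain s' where s': "s = Suc s'" using Suc.prems by (cases s) auto
  have rec: "qbinom c (Suc n) s = of_nat (n div s) + qbinom c (n mod s) s'"
    using Suc qbinom_root_of_unity_mod[of s' n] order(1) s' by simp
  consider "Suc (n mod s) < s" | "Suc (n mod s) = s"
    using mod_less_divisor[OF Suc.prems, of n] by linarith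
  then show ?case
  proof cases
    case 1
    then have "Suc n div s = n div s" by (simp add: div_Suc mod_Suc)
    moreover have "qbinom c (n mod s) s' = 0" using 1 s' by (intro qbinom_eq_0) simp
    ultimately show ?thesis using rec by simp
  next
    case 2
    then have "Suc n div s = Suc (n div s)" "n mod s = s'" using s' by (simp_all add: div_Suc mod_Suc)
    then show ?thesis using rec by simp
  qed
qed (simp add: qbinom_eq_0)

lemma qbinom_mult_order: "0 < s \<Longrightarrow> qbinom c (a * s) s = of_nat a"
  by (simp add: qbinom_root_of_unity_order)

end

section \<open>Tensor powers of \<open>V\<^sub>s\<^sub>+\<^sub>1(\<epsilon>)\<close>\<close>

lemma Vmod_fst: "fst (Vmod \<chi> t \<mu>) g = mat_diag t (\<lambda>i. \<chi> g ^ i * \<mu> g)"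
  by (rule eq_matI) (auto simp: Vmod_def mat_diag_def)

lemma Vmod_snd: "snd (Vmod \<chi> t \<mu>) = shift_mat t"
  by (simp add: Vmod_def shift_mat_def)

text \<open>The basis vector \<open>m\<^sub>i\<^sub>1 \<otimes> \<dots> \<otimes> m\<^sub>i\<^sub>m\<close> of \<open>V\<^bsup>\<otimes>m\<^esup>\<close> has Kronecker index \<open>i\<close> with base-\<open>b\<close> digits
  \<open>i\<^sub>1 \<dots> i\<^sub>m\<close>, and \<open>G\<close> acts on it by \<open>\<chi>\<close> raised to the digit sum.\<close>
fun digit_sum :: "nat \<Rightarrow> nat \<Rightarrow> nat \<Rightarrow> nat" where
  "digit_sum b 0 i = 0"
| "digit_sum b (Suc m) i = digit_sum b m (i div b) + i mod b"

lemma digit_sum_0_right [simp]: "digit_sum b m 0 = 0"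
  by (induction m) auto

lemma digit_sum_le: "i < (s + 1) ^ m \<Longrightarrow> digit_sum (s + 1) m i \<le> m * s"
proof (induction m arbitrary: i)
  case (Suc m)
  have "digit_sum (s + 1) m (i div (s + 1)) \<le> m * s"
    using Suc by (intro Suc.IH) (simp add: less_mult_imp_div_less mult.commute)
  moreover have "i mod (s + 1) \<le> s" by (simp add: less_Suc_eq_le)
  ultimately have "digit_sum (s + 1) m (i div (s + 1)) + i mod (s + 1) \<le> m * s + s" by (rule add_mono)
  then show ?case by simp
qed simp

lemma digit_sum_eq_0: "i < (s + 1) ^ m \<Longrightarrow> digit_sum (s + 1) m i = 0 \<Longrightarrow> i = 0"
proof (induction m arbitrary: i)
  case (Suc m)
  then have "i div (s + 1) = 0" "i mod (s + 1) = 0"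
    by (auto intro!: Suc.IH simp: less_mult_imp_div_less mult.commute)
  then show ?case by (metis div_mult_mod_eq mult_zero_left add_0)
qed simp

context
  fixes \<chi> :: "'g \<Rightarrow> 'k::field" and a :: 'g and s :: nat
begin

lemma htpow_snd_Suc:
  assumes "snd (htpow \<chi> a (Vmod \<chi> (s + 1) eps_char) m) \<in> carrier_mat ((s + 1) ^ m) ((s + 1) ^ m)"
  shows "snd (htpow \<chi> a (Vmod \<chi> (s + 1) eps_char) (Suc m)) =
    kron (snd (htpow \<chi> a (Vmod \<chi> (s + 1) eps_char) m)) (mat_diag (s + 1) (\<lambda>i. \<chi> a ^ i))
    + kron (1\<^sub>m ((s + 1) ^ m)) (shift_mat (s + 1))"
  using assms by (simp add: htensor_def Vmod_fst Vmod_snd hdim_def eps_char_def carrier_matD)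

lemma htpow_Vmod_carrier:
  "snd (htpow \<chi> a (Vmod \<chi> (s + 1) eps_char) m) \<in> carrier_mat ((s + 1) ^ m) ((s + 1) ^ m)"
proof (induction m)
  case (Suc m)
  show ?case
    unfolding htpow_snd_Suc[OF Suc] power_Suc2 by (intro add_carrier_mat kron_carrier_mat Suc) simp_all
qed (simp add: Vmod_snd)

lemma htpow_Vmod_fst:
  "fst (htpow \<chi> a (Vmod \<chi> (s + 1) eps_char) m) g = mat_diag ((s + 1) ^ m) (\<lambda>i. \<chi> g ^ digit_sum (s + 1) m i)"
proof (induction m)
  case 0
  show ?case by (rule eq_matI) (auto simp: Vmod_fst mat_diag_def eps_char_def)
next
  case (Suc m)
  have "fst (htpow \<chi> a (Vmod \<chi> (s + 1) eps_char) (Suc m)) g =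
      kron (mat_diag ((s + 1) ^ m) (\<lambda>i. \<chi> g ^ digit_sum (s + 1) m i)) (mat_diag (s + 1) (\<lambda>i. \<chi> g ^ i))"
    using Suc by (simp add: htensor_def Vmod_fst eps_char_def)
  also have "\<dots> = mat_diag ((s + 1) ^ m * (s + 1))
      (\<lambda>i. \<chi> g ^ digit_sum (s + 1) m (i div (s + 1)) * \<chi> g ^ (i mod (s + 1)))"
    by (rule kron_mat_diag)
  also have "\<dots> = mat_diag ((s + 1) ^ Suc m) (\<lambda>i. \<chi> g ^ digit_sum (s + 1) (Suc m) i)"
    by (simp add: power_add mult.commute)
  finally show ?case .
qed

lemma htpow_Vmod_homogeneous:
  "homogeneous_mat (digit_sum (s + 1) m) (digit_sum (s + 1) m) 1 (snd (htpow \<chi> a (Vmod \<chi> (s + 1) eps_char) m))"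
proof (induction m)
  case 0
  show ?case by (simp add: Vmod_snd homogeneous_mat_def shift_mat_def)
next
  case (Suc m)
  define X where "X = snd (htpow \<chi> a (Vmod \<chi> (s + 1) eps_char) m)"
  have X: "X \<in> carrier_mat ((s + 1) ^ m) ((s + 1) ^ m)" unfolding X_def by (rule htpow_Vmod_carrier)
  have digit_sum_Suc: "digit_sum (s + 1) (Suc m) = (\<lambda>i. digit_sum (s + 1) m (i div (s + 1)) + i mod (s + 1))"
    by (rule ext) simp
  have hom_diag: "homogeneous_mat (\<lambda>i. digit_sum (s + 1) m (i div (s + 1)) + i mod (s + 1))
      (\<lambda>i. digit_sum (s + 1) m (i div (s + 1)) + i mod (s + 1)) 1 (kron X (mat_diag (s + 1) ((^) (\<chi> a))))"
    using homogeneous_mat_kron[OF Suc[folded X_def] homogeneous_mat_mat_diag[of "\<lambda>i. i"] mat_diag_dim] by simp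
  have hom_shift: "homogeneous_mat (\<lambda>i. digit_sum (s + 1) m (i div (s + 1)) + i mod (s + 1))
      (\<lambda>i. digit_sum (s + 1) m (i div (s + 1)) + i mod (s + 1)) 1 (kron (1\<^sub>m ((s + 1) ^ m)) (shift_mat (s + 1)))"
    using homogeneous_mat_kron[OF homogeneous_mat_one homogeneous_shift_mat shift_mat_carrier(1)] by simp
  have "kron (1\<^sub>m ((s + 1) ^ m)) (shift_mat (s + 1)) \<in>
      carrier_mat (dim_row (kron X (mat_diag (s + 1) ((^) (\<chi> a))))) (dim_col (kron X (mat_diag (s + 1) ((^) (\<chi> a)))))"
    using X unfolding carrier_mat_def by (simp add: mat_diag_def)
  from homogeneous_mat_add[OF hom_diag hom_shift this] show ?case
    unfolding htpow_snd_Suc[OF htpow_Vmod_carrier] X_def[symmetric] digit_sum_Suc .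
qed

end

lemma index_kron_shift:
  fixes X :: "'a::field mat"
  assumes X: "X \<in> carrier_mat N N" and ik: "i < N" "k < N" and jl: "j < b" "l < b"
  shows "(kron X (mat_diag b (\<lambda>j. c ^ j)) + kron (1\<^sub>m N) (shift_mat b)) $$ (i * b + j, k * b + l) =
    X $$ (i, k) * (if j = l then c ^ j else 0) + (if i = k \<and> j = l + 1 then 1 else 0)"
proof -
  have lt: "i * b + j < N * b" "k * b + l < N * b"
    using ik jl by (simp_all add: mult_add_less_mult)
  have dm: "(i * b + j) div b = i" "(i * b + j) mod b = j" "(k * b + l) div b = k" "(k * b + l) mod b = l"
    using jl by simp_all
  show ?thesis
    using lt dm X ik jl by (simp add: index_kron mat_diag_def shift_mat_def)
qed

text \<open>With \<open>D = diag(c\<^sup>j)\<close> and \<open>S\<close> the shift, \<open>D S = c S D\<close>, so the \<open>q\<close>-binomial theorem expands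
  \<open>(X \<otimes> D + 1 \<otimes> S)\<^sup>n (v \<otimes> m\<^sub>0) = \<Sum>\<^sub>j qbinom c n j X\<^sup>n\<^sup>-\<^sup>j v \<otimes> m\<^sub>j\<close>.\<close>
lemma index_kron_shift_pow:
  fixes X :: "'a::field mat"
  assumes X: "X \<in> carrier_mat N N" and "i < N" "j < b"
  shows "((kron X (mat_diag b (\<lambda>j. c ^ j)) + kron (1\<^sub>m N) (shift_mat b)) ^\<^sub>m n) $$ (i * b + j, 0)
    = qbinom c n j * (X ^\<^sub>m (n - j)) $$ (i, 0)"
proof -
  define Y where "Y = kron X (mat_diag b (\<lambda>j. c ^ j)) + kron (1\<^sub>m N) (shift_mat b)"
  have Y: "Y \<in> carrier_mat (N * b) (N * b)"
    unfolding Y_def using X by (intro add_carrier_mat kron_carrier_mat) auto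
  have lt: "i * b + j < N * b" if "i < N" "j < b" for i j
    using that by (rule mult_add_less_mult)
  have "(Y ^\<^sub>m n) $$ (i * b + j, 0) = qbinom c n j * (X ^\<^sub>m (n - j)) $$ (i, 0)" if "i < N" "j < b" for i j
    using that
  proof (induction n arbitrary: i j)
    case 0
    then show ?case using Y X lt[OF 0] by auto
  next
    case (Suc n)
    define T where "T k l = (X $$ (i, k) * (if j = l then c ^ j else 0) + (if i = k \<and> j = l + 1 then 1 else 0))
      * (qbinom c n l * (X ^\<^sub>m (n - l)) $$ (k, 0))" for k l
    have "(Y ^\<^sub>m Suc n) $$ (i * b + j, 0) = (\<Sum>q<N * b. Y $$ (i * b + j, q) * (Y ^\<^sub>m n) $$ (q, 0))"
      by (rule index_pow_mat_Suc_left[OF Y lt[OF Suc.prems]]) (use Suc.prems in simp)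
    also have "\<dots> = (\<Sum>k<N. \<Sum>l<b. T k l)"
      unfolding sum_lessThan_mult T_def
      using index_kron_shift[OF X] Suc.IH Suc.prems by (intro sum.cong refl) (simp add: Y_def)
    also have "\<dots> = c ^ j * qbinom c n j * (\<Sum>k<N. X $$ (i, k) * (X ^\<^sub>m (n - j)) $$ (k, 0))
        + (if 0 < j then qbinom c n (j - 1) * (X ^\<^sub>m (n - (j - 1))) $$ (i, 0) else 0)"
    proof -
      have "(\<Sum>l<b. T k l) = X $$ (i, k) * c ^ j * (qbinom c n j * (X ^\<^sub>m (n - j)) $$ (k, 0))
          + (if i = k \<and> 0 < j then qbinom c n (j - 1) * (X ^\<^sub>m (n - (j - 1))) $$ (k, 0) else 0)" for k
        using Suc.prems
        by (auto simp: T_def sum.distrib algebra_simps sum_lessThan_eq_single[of j] sum_lessThan_eq_single[of "j - 1"])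
      then show ?thesis
        using Suc.prems by (simp add: sum.distrib sum_distrib_left algebra_simps sum_lessThan_eq_single[of i])
    qed
    also have "(\<Sum>k<N. X $$ (i, k) * (X ^\<^sub>m (n - j)) $$ (k, 0)) = (X ^\<^sub>m Suc (n - j)) $$ (i, 0)"
      using index_pow_mat_Suc_left[OF X Suc.prems(1), of 0 "n - j"] Suc.prems X by fastforce
    also have "c ^ j * qbinom c n j * (X ^\<^sub>m Suc (n - j)) $$ (i, 0)
        + (if 0 < j then qbinom c n (j - 1) * (X ^\<^sub>m (n - (j - 1))) $$ (i, 0) else 0)
        = qbinom c (Suc n) j * (X ^\<^sub>m (Suc n - j)) $$ (i, 0)"
      by (rule qbinom_Suc_weighted[where x = "\<lambda>k. (X ^\<^sub>m k) $$ (i, 0)"])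
    finally show ?case .
  qed
  then show ?thesis using assms unfolding Y_def by blast
qed

lemma htpow_top_entry:
  fixes \<chi> :: "'g \<Rightarrow> 'k::field_char_0"
  assumes s: "0 < s" and order: "\<chi> a ^ s = 1" "\<And>k. 0 < k \<Longrightarrow> k < s \<Longrightarrow> \<chi> a ^ k \<noteq> 1"
  shows "(snd (htpow \<chi> a (Vmod \<chi> (s + 1) eps_char) m) ^\<^sub>m (m * s)) $$ ((s + 1) ^ m - 1, 0) \<noteq> 0"
proof (induction m)
  case 0
  show ?case by (simp add: Vmod_snd)
next
  case (Suc m)
  define X where "X = snd (htpow \<chi> a (Vmod \<chi> (s + 1) eps_char) m)"
  define N where "N = (s + 1) ^ m"
  have X: "X \<in> carrier_mat N N" using htpow_Vmod_carrier[of \<chi> a s m] by (simp add: X_def N_def)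
  have N: "0 < N" by (simp add: N_def)
  have "(s + 1) ^ Suc m - 1 = (N - 1) * (s + 1) + s"
    using N by (cases N) (simp_all add: N_def algebra_simps)
  then have "(snd (htpow \<chi> a (Vmod \<chi> (s + 1) eps_char) (Suc m)) ^\<^sub>m (Suc m * s)) $$ ((s + 1) ^ Suc m - 1, 0)
      = qbinom (\<chi> a) (Suc m * s) s * (X ^\<^sub>m (Suc m * s - s)) $$ (N - 1, 0)"
    using htpow_snd_Suc[OF htpow_Vmod_carrier[of \<chi> a s m]] index_kron_shift_pow[OF X, of "N - 1" s "s + 1"] N
    by (simp add: X_def N_def)
  also have "\<dots> = of_nat (Suc m) * (X ^\<^sub>m (m * s)) $$ (N - 1, 0)"
    using qbinom_mult_order[OF order s, of "Suc m"] by simp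
  moreover have "(of_nat (Suc m) :: 'k) \<noteq> 0" by (rule of_nat_neq_0)
  ultimately show ?case using Suc by (simp add: X_def N_def)
qed

lemma hdsum_list_Vmod:
  "snd (hdsum_list (map (\<lambda>(l, e). Vmod \<chi> l (\<lambda>g. \<chi> g ^ e)) L)) = jordan_blocks L \<and>
   fst (hdsum_list (map (\<lambda>(l, e). Vmod \<chi> l (\<lambda>g. \<chi> g ^ e)) L)) =
     (\<lambda>g. mat_diag (sum_list (map fst L)) (\<lambda>i. \<chi> g ^ block_degree L i))"
proof (induction L)
  case Nil
  show ?case by (auto simp: hzero_def mat_diag_def intro!: eq_matI)
next
  case (Cons b L)
  obtain l e where b: "b = (l, e)" by (cases b)
  have "hdim (hdsum_list (map (\<lambda>(l, e). Vmod \<chi> l (\<lambda>g. \<chi> g ^ e)) L)) = sum_list (map fst L)"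
    using Cons by (simp add: hdim_def)
  moreover have "hdim (Vmod \<chi> l (\<lambda>g. \<chi> g ^ e)) = l" by (simp add: hdim_def Vmod_snd)
  moreover have "(\<lambda>i. \<chi> g ^ (if i < l then e + i else block_degree L (i - l))) =
      (\<lambda>i. if i < l then \<chi> g ^ i * \<chi> g ^ e else \<chi> g ^ block_degree L (i - l))" for g
    by (auto simp: power_add mult.commute)
  ultimately show ?case
    using Cons b by (simp add: hdsum_def Vmod_fst Vmod_snd four_block_mat_diag)
qed

lemma hmod_iso_graded_jordan:
  fixes \<chi> :: "'g \<Rightarrow> 'k::field"
  assumes wit: "graded_jordan_wit L d X P Q" and X: "X \<in> carrier_mat n n"
    and M: "\<And>g. fst M g = mat_diag n (\<lambda>i. \<chi> g ^ d i)" "snd M = X"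
  shows "hmod_iso G M (hdsum_list (map (\<lambda>(l, e). Vmod \<chi> l (\<lambda>g. \<chi> g ^ e)) L))"
proof -
  note W = graded_jordan_witD[OF wit X]
  note N = hdsum_list_Vmod[of \<chi> L]
  have dims: "hdim M = n" "hdim (hdsum_list (map (\<lambda>(l, e). Vmod \<chi> l (\<lambda>g. \<chi> g ^ e)) L)) = n"
    using X M(2) N W(6) by (simp_all add: hdim_def)
  have "P * X = jordan_blocks L * P"
    using W X by (simp add: assoc_mult_mat[of _ n n _ n _ n])
  moreover have "P * mat_diag n (\<lambda>i. \<chi> g ^ d i) = mat_diag n (\<lambda>i. \<chi> g ^ block_degree L i) * P" for g
    using homogeneous_mat_mat_diag_commute[OF W(7,1), of "\<lambda>e. \<chi> g ^ e"] by simp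
  ultimately show ?thesis
    unfolding hmod_iso_def dims using W M N by auto
qed

lemma htpow_graded_jordan:
  fixes \<chi> :: "'g \<Rightarrow> 'k::field_char_0"
  assumes s: "0 < s" and order: "\<chi> a ^ s = 1" "\<And>k. 0 < k \<Longrightarrow> k < s \<Longrightarrow> \<chi> a ^ k \<noteq> 1"
  obtains L P Q where
    "graded_jordan_wit ((m * s + 1, 0) # L) (digit_sum (s + 1) m) (snd (htpow \<chi> a (Vmod \<chi> (s + 1) eps_char) m)) P Q"
    "\<forall>(l, e)\<in>set L. 0 < l \<and> l \<le> m * s"
proof -
  define X where "X = snd (htpow \<chi> a (Vmod \<chi> (s + 1) eps_char) m)"
  define n where "n = (s + 1) ^ m"
  have X: "X \<in> carrier_mat n n" and hom: "homogeneous_mat (digit_sum (s + 1) m) (digit_sum (s + 1) m) 1 X"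
    using htpow_Vmod_carrier[of \<chi> a s m] htpow_Vmod_homogeneous[where \<chi> = \<chi> and a = a and s = s and m = m]
    by (simp_all add: X_def n_def)
  have "jordan_chain X n (m * s + 1) (digit_sum (s + 1) m) (n - 1) 0"
  proof
    show "X ^\<^sub>m (m * s + 1) = 0\<^sub>m n n"
      by (rule homogeneous_mat_pow_eq_0[OF hom X, where D = "m * s"])
        (use digit_sum_le[of _ s m] in \<open>simp_all add: n_def\<close>)
    show "(X ^\<^sub>m (m * s + 1 - 1)) $$ (n - 1, 0) \<noteq> 0"
      using htpow_top_entry[of s \<chi> a m, OF s order] by (simp add: X_def n_def)
  qed (use X hom in \<open>simp_all add: n_def\<close>)
  then interpret jordan_chain X n "m * s + 1" "digit_sum (s + 1) m" "n - 1" 0 .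
  obtain L P Q where wit: "graded_jordan_wit ((m * s + 1, 0) # L) (digit_sum (s + 1) m) X P Q"
    using graded_jordan_decomposition_chain by auto
  have "l \<le> m * s" if "(l, e) \<in> set L" for l e
    using graded_jordan_wit_block_length_le[OF wit X _ _ _ that] digit_sum_le[of _ s m]
      digit_sum_eq_0[of _ s m]
    by (simp add: n_def)
  moreover have "0 < l" if "(l, e) \<in> set L" for l e
    using wit that by (auto simp: graded_jordan_wit_def)
  ultimately have "\<forall>(l, e)\<in>set L. 0 < l \<and> l \<le> m * s" by auto
  with wit show ?thesis unfolding X_def by (rule that)
qed

lemma htpow_hmod_iso:
  fixes \<chi> :: "'g \<Rightarrow> 'k::field"
  assumes "graded_jordan_wit ((m * s + 1, 0) # L) (digit_sum (s + 1) m) (snd (htpow \<chi> a (Vmod \<chi> (s + 1) eps_char) m)) P Q"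
  shows "hmod_iso G (htpow \<chi> a (Vmod \<chi> (s + 1) eps_char) m)
    (hdsum (Vmod \<chi> (m * s + 1) eps_char) (hdsum_list (map (\<lambda>(l, e). Vmod \<chi> l (\<lambda>g. \<chi> g ^ e)) L)))"
proof -
  have "hmod_iso G (htpow \<chi> a (Vmod \<chi> (s + 1) eps_char) m)
      (hdsum_list (map (\<lambda>(l, e). Vmod \<chi> l (\<lambda>g. \<chi> g ^ e)) ((m * s + 1, 0) # L)))"
    using htpow_Vmod_fst htpow_Vmod_carrier by (intro hmod_iso_graded_jordan[OF assms]) auto
  then show ?thesis by (simp add: eps_char_def)
qed

lemma character_power: "character G \<chi> \<Longrightarrow> character G (\<lambda>g. \<chi> g ^ e)"
  by (simp add: character_def power_mult_distrib)

lemma in_P_hdsum_list_Vmod: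
  assumes "character G \<chi>" "\<forall>(l, e)\<in>set L. 0 < l \<and> l \<le> m * s"
  shows "in_P G \<chi> s m (hdsum_list (map (\<lambda>(l, e). Vmod \<chi> l (\<lambda>g. \<chi> g ^ e)) L))"
  unfolding in_P_def
proof (intro exI conjI)
  show "hdsum_list (map (\<lambda>(l, e). Vmod \<chi> l (\<lambda>g. \<chi> g ^ e)) L) =
      hdsum_list (map (\<lambda>(i, \<mu>). Vmod \<chi> i \<mu>) (map (\<lambda>(l, e). (l, \<lambda>g. \<chi> g ^ e)) L))"
    by (induction L) auto
  show "\<forall>(i, \<mu>)\<in>set (map (\<lambda>(l, e). (l, \<lambda>g. \<chi> g ^ e)) L). 1 \<le> i \<and> i \<le> m * s \<and> character G \<mu>"
    using assms by (auto simp: character_power)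
qed

theorem lemma4p9:
  fixes G :: "'g monoid" and \<chi> :: "'g \<Rightarrow> 'k::field_char_0" and a :: 'g and s :: nat
  assumes "alg_closed TYPE('k)"
    and "group G"
    and "a \<in> carrier G" and "\<forall>g\<in>carrier G. a \<otimes>\<^bsub>G\<^esub> g = g \<otimes>\<^bsub>G\<^esub> a"
    and "character G \<chi>" and "\<chi> a \<noteq> 1"
    and "\<forall>n::nat. n > 0 \<longrightarrow> (\<exists>g\<in>carrier G. \<chi> g ^ n \<noteq> 1)"
    and "s > 0" and "inverse (\<chi> a) ^ s = 1"
    and "\<forall>n. 0 < n \<and> n < s \<longrightarrow> inverse (\<chi> a) ^ n \<noteq> 1"
  shows "\<forall>m::nat. \<exists>E. in_P G \<chi> s m E \<and>
           hmod_iso G (htpow \<chi> a (Vmod \<chi> (s + 1) eps_char) m)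
                      (hdsum (Vmod \<chi> (m * s + 1) eps_char) E)"
proof
  fix m :: nat
  \<comment> \<open>Only the order of \<open>\<chi> a\<close> is used: the degree-preserving Jordan bases replace the weight-space
      arguments that need \<open>|\<chi>| = \<infinity>\<close> and algebraic closure.\<close>
  have order: "\<chi> a ^ s = 1" "\<And>k. 0 < k \<Longrightarrow> k < s \<Longrightarrow> \<chi> a ^ k \<noteq> 1"
    using assms(9,10) by (auto simp: power_inverse)
  obtain L P Q where wit: "graded_jordan_wit ((m * s + 1, 0) # L) (digit_sum (s + 1) m)
      (snd (htpow \<chi> a (Vmod \<chi> (s + 1) eps_char) m)) P Q" and L: "\<forall>(l, e)\<in>set L. 0 < l \<and> l \<le> m * s"
    using htpow_graded_jordan[of s \<chi> a, OF \<open>s > 0\<close> order] by blast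
  show "\<exists>E. in_P G \<chi> s m E \<and>
      hmod_iso G (htpow \<chi> a (Vmod \<chi> (s + 1) eps_char) m) (hdsum (Vmod \<chi> (m * s + 1) eps_char) E)"
    using in_P_hdsum_list_Vmod[OF assms(5) L] htpow_hmod_iso[OF wit] by blast
qed

end
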